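(* Let $X \subseteq \mathbb{P}^r$ be a projective variety of dimension $n$ over $\mathbb{C}$, and $p \in X$ a closed point. Suppose $m$ is a positive integer such that $\mathfrak{m}_{X,p}^m \subseteq J$ for every minimal reduction $J$ of $\mathfrak{m}_{X,p}$. If $L\subseteq\mathbb{P}^r$ is a reduction linear subspace at $(X,p)$, then $ll(\mathcal{O}_{X\cap L,p}) \leq m-1$.
   Context: For an Artinian local ring $(A,\mathfrak{m})$, the Loewy length is $ll(A):=\max\{i\mid \mathfrak{m}^i\neq 0\}$ (with $ll(A)=0$ if $A$ is a field). For a Noetherian local ring $(R,\mathfrak{m})$, an ideal $J\subseteq\mathfrak{m}$ is a reduction of $\mathfrak{m}$ if $\mathfrak{m}^{k+1}=J\mathfrak{m}^k$ for some $k\geq 0$; a minimal reduction is a reduction minimal with respect to inclusion. For $p\in X$ and a linear subspace $L\subseteq\mathbb{P}^r$ through $p$ cut out by linear forms $l_1,\dots,l_k$, let $\bar l_i\in\mathfrak{m}_{X,p}$ be their images (via $\mathfrak{m}_{X,p}=\mathfrak{m}_{\mathbb{P}^r,p}/I_{X,p}$); $L$ is a reduction linear subspace at $(X,p)$ if $(\bar l_1,\dots,\bar l_k)$ is a reduction of $\mathfrak{m}_{X,p}$. $X\cap L$ is the scheme-theoretic intersection. *)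

theory Defs
  imports Complex_Main "HOL-Library.Poly_Mapping" "HOL-Algebra.Ideal_Product"
begin

type_synonym mpoly = "(nat \<Rightarrow>\<^sub>0 nat) \<Rightarrow>\<^sub>0 complex"

definition mon_deg :: "(nat \<Rightarrow>\<^sub>0 nat) \<Rightarrow> nat" where
  "mon_deg a = (\<Sum>i\<in>Poly_Mapping.keys a. Poly_Mapping.lookup a i)"

definition mpoly_eval :: "mpoly \<Rightarrow> (nat \<Rightarrow> complex) \<Rightarrow> complex" where
  "mpoly_eval f x = (\<Sum>a\<in>Poly_Mapping.keys f.
      Poly_Mapping.lookup f a * (\<Prod>i\<in>Poly_Mapping.keys a. x i ^ Poly_Mapping.lookup a i))"

text \<open>The polynomial ring S = C[x_0,...,x_r] as a subset of mpoly.\<close>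
definition in_S :: "nat \<Rightarrow> mpoly \<Rightarrow> bool" where
  "in_S r f \<longleftrightarrow> (\<forall>a\<in>Poly_Mapping.keys f. Poly_Mapping.keys a \<subseteq> {..r})"

definition homog :: "nat \<Rightarrow> mpoly \<Rightarrow> bool" where
  "homog d f \<longleftrightarrow> (\<forall>a\<in>Poly_Mapping.keys f. mon_deg a = d)"

definition hom_part :: "nat \<Rightarrow> mpoly \<Rightarrow> mpoly" where
  "hom_part d f = (\<Sum>a\<in>{a\<in>Poly_Mapping.keys f. mon_deg a = d}.
                      Poly_Mapping.single a (Poly_Mapping.lookup f a))"

definition Var :: "nat \<Rightarrow> mpoly" where
  "Var i = Poly_Mapping.single (Poly_Mapping.single i 1) 1"

definition S_ideal :: "nat \<Rightarrow> mpoly set \<Rightarrow> bool" where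
  "S_ideal r I \<longleftrightarrow> (\<forall>f\<in>I. in_S r f) \<and> 0 \<in> I \<and> (\<forall>f\<in>I. \<forall>g\<in>I. f + g \<in> I)
      \<and> (\<forall>f\<in>I. \<forall>g. in_S r g \<longrightarrow> g * f \<in> I)"

definition S_homogeneous_ideal :: "nat \<Rightarrow> mpoly set \<Rightarrow> bool" where
  "S_homogeneous_ideal r I \<longleftrightarrow> S_ideal r I \<and> (\<forall>f\<in>I. \<forall>d. hom_part d f \<in> I)"

definition S_prime_ideal :: "nat \<Rightarrow> mpoly set \<Rightarrow> bool" where
  "S_prime_ideal r I \<longleftrightarrow> S_ideal r I \<and> 1 \<notin> I
      \<and> (\<forall>f g. in_S r f \<longrightarrow> in_S r g \<longrightarrow> f * g \<in> I \<longrightarrow> f \<in> I \<or> g \<in> I)"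

definition S_gen_ideal :: "nat \<Rightarrow> mpoly set \<Rightarrow> mpoly set" where
  "S_gen_ideal r G = \<Inter>{I. S_ideal r I \<and> G \<subseteq> I}"

text \<open>A projective variety X in P^r: the zero locus of a homogeneous prime ideal P of S
  (its homogeneous ideal).\<close>
definition proj_variety :: "nat \<Rightarrow> mpoly set \<Rightarrow> bool" where
  "proj_variety r P \<longleftrightarrow> S_homogeneous_ideal r P \<and> S_prime_ideal r P"

text \<open>Closed points of P^r are given by nonzero vectors (p_0,...,p_r) (coordinates beyond r are 0);
  p lies on the closed subscheme defined by the homogeneous ideal I iff all elements of I vanish at p.\<close>
definition proj_point :: "nat \<Rightarrow> (nat \<Rightarrow> complex) \<Rightarrow> bool" where
  "proj_point r p \<longleftrightarrow> (\<exists>i\<le>r. p i \<noteq> 0) \<and> (\<forall>i>r. p i = 0)"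

definition on_subscheme :: "mpoly set \<Rightarrow> (nat \<Rightarrow> complex) \<Rightarrow> bool" where
  "on_subscheme I p \<longleftrightarrow> (\<forall>f\<in>I. mpoly_eval f p = 0)"

text \<open>Homogeneous localization: fractions f/g with f, g homogeneous of the same degree and
  g(p) \<noteq> 0, where f/g = f'/g' iff s (f g' - f' g) \<in> I for some homogeneous s with s(p) \<noteq> 0.\<close>
definition frac_dom :: "nat \<Rightarrow> (nat \<Rightarrow> complex) \<Rightarrow> (mpoly \<times> mpoly) set" where
  "frac_dom r p = {(f, g). in_S r f \<and> in_S r g \<and> (\<exists>d. homog d f \<and> homog d g)
                          \<and> mpoly_eval g p \<noteq> 0}"

definition frac_cls :: "nat \<Rightarrow> mpoly set \<Rightarrow> (nat \<Rightarrow> complex) \<Rightarrow> mpoly \<times> mpoly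
      \<Rightarrow> (mpoly \<times> mpoly) set" where
  "frac_cls r I p x = {y \<in> frac_dom r p. \<exists>s d. in_S r s \<and> homog d s \<and> mpoly_eval s p \<noteq> 0
                         \<and> s * (fst x * snd y - fst y * snd x) \<in> I}"

definition frac_rep :: "(mpoly \<times> mpoly) set \<Rightarrow> mpoly \<times> mpoly" where
  "frac_rep A = (SOME x. x \<in> A)"

definition local_ring :: "nat \<Rightarrow> mpoly set \<Rightarrow> (nat \<Rightarrow> complex) \<Rightarrow> (mpoly \<times> mpoly) set ring" where
  "local_ring r I p =
     \<lparr> carrier = frac_cls r I p ` frac_dom r p,
       monoid.mult = (\<lambda>A B. frac_cls r I p
          (fst (frac_rep A) * fst (frac_rep B), snd (frac_rep A) * snd (frac_rep B))),
       one = frac_cls r I p (1, 1),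
       zero = frac_cls r I p (0, 1),
       add = (\<lambda>A B. frac_cls r I p
          (fst (frac_rep A) * snd (frac_rep B) + fst (frac_rep B) * snd (frac_rep A),
           snd (frac_rep A) * snd (frac_rep B))) \<rparr>"

definition max_ideal :: "('a, 'b) ring_scheme \<Rightarrow> 'a set" where
  "max_ideal R = carrier R - Units R"

primrec ideal_pow :: "('a, 'b) ring_scheme \<Rightarrow> 'a set \<Rightarrow> nat \<Rightarrow> 'a set" where
  "ideal_pow R I 0 = carrier R"
| "ideal_pow R I (Suc n) = ideal_prod R I (ideal_pow R I n)"

definition is_reduction_of_max :: "('a, 'b) ring_scheme \<Rightarrow> 'a set \<Rightarrow> bool" where
  "is_reduction_of_max R J \<longleftrightarrow> ideal J R \<and> J \<subseteq> max_ideal R \<and>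
     (\<exists>k. ideal_pow R (max_ideal R) (Suc k) = ideal_prod R J (ideal_pow R (max_ideal R) k))"

definition is_minimal_reduction_of_max :: "('a, 'b) ring_scheme \<Rightarrow> 'a set \<Rightarrow> bool" where
  "is_minimal_reduction_of_max R J \<longleftrightarrow> is_reduction_of_max R J \<and>
     (\<forall>J'. is_reduction_of_max R J' \<and> J' \<subseteq> J \<longrightarrow> J' = J)"

definition loewy_length :: "('a, 'b) ring_scheme \<Rightarrow> nat" where
  "loewy_length A = Max {i. ideal_pow A (max_ideal A) i \<noteq> {\<zero>\<^bsub>A\<^esub>}}"

definition linear_form :: "nat \<Rightarrow> mpoly \<Rightarrow> bool" where
  "linear_form r l \<longleftrightarrow> in_S r l \<and> homog 1 l"

text \<open>Image of a linear form l (vanishing at p) in m_{X,p}: the germ l / x_i, where x_i is the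
  first coordinate not vanishing at p.\<close>
definition germ_of_linear_form :: "nat \<Rightarrow> mpoly set \<Rightarrow> (nat \<Rightarrow> complex) \<Rightarrow> mpoly
      \<Rightarrow> (mpoly \<times> mpoly) set" where
  "germ_of_linear_form r I p l = frac_cls r I p (l, Var (LEAST i. p i \<noteq> 0))"

text \<open>The linear subspace L cut out by the linear forms ls passes through p and is a reduction
  linear subspace at (X,p).\<close>
definition reduction_linear_subspace :: "nat \<Rightarrow> mpoly set \<Rightarrow> (nat \<Rightarrow> complex) \<Rightarrow> mpoly list
      \<Rightarrow> bool" where
  "reduction_linear_subspace r P p ls \<longleftrightarrow>
     (\<forall>l\<in>set ls. linear_form r l \<and> mpoly_eval l p = 0) \<and>
     is_reduction_of_max (local_ring r P p)
        (genideal (local_ring r P p) (germ_of_linear_form r P p ` set ls))"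

text \<open>Homogeneous ideal of the scheme-theoretic intersection X \<inter> L.\<close>
definition intersection_ideal :: "nat \<Rightarrow> mpoly set \<Rightarrow> mpoly list \<Rightarrow> mpoly set" where
  "intersection_ideal r P ls = S_gen_ideal r (P \<union> set ls)"

end

theory Submission
  imports Defs "HOL-Algebra.RingHom"
begin

text \<open>
  Write \<open>M\<close> for the maximal ideal of \<open>O_{X,p}\<close>. The germs of the linear forms cutting out \<open>L\<close>
  generate a reduction \<open>J_L\<close> of \<open>M\<close>, and \<open>J_L\<close> contains a minimal reduction: among the
  reductions generated by finite subsets of \<open>J_L\<close> take one with fewest generators; Nakayama's lemma
  together with an exchange argument modulo \<open>M\<close> shows that it is minimal. (Nakayama needs \<open>M\<close>
  to be finitely generated; it is generated by the germs \<open>x_j/x_i - p_j/p_i\<close> for a coordinate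
  \<open>x_i\<close> not vanishing at \<open>p\<close>.) Hence \<open>M^m \<subseteq> J_L\<close>. Restricting germs from \<open>X\<close> to
  \<open>X \<inter> L\<close> is a surjective ring map onto \<open>O_{X\<inter>L,p}\<close> that kills \<open>J_L\<close> and maps \<open>M\<close> onto
  the maximal ideal, so the \<open>m\<close>-th power of the latter is zero.
\<close>

section \<open>Evaluation, the ring S and homogeneity\<close>

lemma mpoly_induct [case_names zero add]:
  fixes P :: "('a \<Rightarrow>\<^sub>0 'b::monoid_add) \<Rightarrow> bool"
  assumes "P 0"
    and "\<And>f a c. a \<notin> Poly_Mapping.keys f \<Longrightarrow> c \<noteq> 0 \<Longrightarrow> P f \<Longrightarrow> P (f + Poly_Mapping.single a c)"
  shows "P f"
proof (induction f rule: update_induct)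
  case const then show ?case using assms(1) .
next
  case (update f a b)
  have "Poly_Mapping.update a b f = f + Poly_Mapping.single a b"
    using update(1) by (intro poly_mapping_eqI) (auto simp: lookup_update lookup_add lookup_single in_keys_iff)
  then show ?case using update assms(2)[of a f b] by simp
qed

lemma keys_add_single:
  fixes f :: "'a \<Rightarrow>\<^sub>0 'b::monoid_add"
  assumes "a \<notin> Poly_Mapping.keys f" "c \<noteq> 0"
  shows "Poly_Mapping.keys (f + Poly_Mapping.single a c) = insert a (Poly_Mapping.keys f)"
  using assms by (auto simp: in_keys_iff lookup_add lookup_single when_def split: if_splits)

lemma keys_add_nat: "Poly_Mapping.keys (a + b :: 'a \<Rightarrow>\<^sub>0 nat) = Poly_Mapping.keys a \<union> Poly_Mapping.keys b"
  by (auto simp: in_keys_iff lookup_add)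

definition mon_eval :: "(nat \<Rightarrow>\<^sub>0 nat) \<Rightarrow> (nat \<Rightarrow> complex) \<Rightarrow> complex" where
  "mon_eval a x = (\<Prod>i\<in>Poly_Mapping.keys a. x i ^ Poly_Mapping.lookup a i)"

lemma mpoly_eval_mon: "mpoly_eval f x = (\<Sum>a\<in>Poly_Mapping.keys f. Poly_Mapping.lookup f a * mon_eval a x)"
  unfolding mpoly_eval_def mon_eval_def ..

lemma mon_eval_superset:
  assumes "finite S" "Poly_Mapping.keys a \<subseteq> S"
  shows "mon_eval a x = (\<Prod>i\<in>S. x i ^ Poly_Mapping.lookup a i)"
  unfolding mon_eval_def
  by (rule prod.mono_neutral_left) (use assms in \<open>auto simp: in_keys_iff\<close>)

lemma mon_eval_add: "mon_eval (a + b) x = mon_eval a x * mon_eval b x"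
proof -
  let ?S = "Poly_Mapping.keys a \<union> Poly_Mapping.keys b"
  have "mon_eval (a + b) x = (\<Prod>i\<in>?S. x i ^ Poly_Mapping.lookup (a + b) i)"
    by (rule mon_eval_superset) (auto simp: keys_add_nat)
  also have "\<dots> = (\<Prod>i\<in>?S. x i ^ Poly_Mapping.lookup a i) * (\<Prod>i\<in>?S. x i ^ Poly_Mapping.lookup b i)"
    by (simp add: lookup_add power_add prod.distrib)
  also have "\<dots> = mon_eval a x * mon_eval b x"
    by (subst (1 2) mon_eval_superset[of ?S]) auto
  finally show ?thesis .
qed

lemma mon_eval_zero [simp]: "mon_eval 0 x = 1"
  by (simp add: mon_eval_def)

lemma mon_eval_single: "mon_eval (Poly_Mapping.single j k) x = x j ^ k"
  by (simp add: mon_eval_def)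

lemma mpoly_eval_zero [simp]: "mpoly_eval 0 x = 0"
  by (simp add: mpoly_eval_def)

lemma mpoly_eval_add: "mpoly_eval (f + g) x = mpoly_eval f x + mpoly_eval g x"
  unfolding mpoly_eval_mon
  by (rule setsum_keys_plus_distrib) (auto simp: distrib_right)

lemma mpoly_eval_single: "mpoly_eval (Poly_Mapping.single a c) x = c * mon_eval a x"
  by (simp add: mpoly_eval_mon)

lemma mpoly_eval_diff: "mpoly_eval (f - g) x = mpoly_eval f x - mpoly_eval g x"
  using mpoly_eval_add[of "f - g" g x] by simp

lemma mpoly_eval_mult_single:
  "mpoly_eval (Poly_Mapping.single a c * g) x = c * mon_eval a x * mpoly_eval g x"
proof (induction g rule: mpoly_induct)
  case zero then show ?case by simp
next
  case (add f b d)
  then show ?case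
    by (simp add: distrib_left mpoly_eval_add mult_single mpoly_eval_single mon_eval_add algebra_simps)
qed

lemma mpoly_eval_mult: "mpoly_eval (f * g) x = mpoly_eval f x * mpoly_eval g x"
proof (induction f rule: mpoly_induct)
  case zero then show ?case by simp
next
  case (add f a c)
  then show ?case
    by (simp add: distrib_right mpoly_eval_add mpoly_eval_mult_single mpoly_eval_single)
qed

lemma mpoly_eval_one [simp]: "mpoly_eval 1 x = 1"
  using mpoly_eval_single[of 0 1 x] by simp

lemma mpoly_eval_power: "mpoly_eval (f ^ n) x = mpoly_eval f x ^ n"
  by (induction n) (simp_all add: mpoly_eval_mult)

lemma mpoly_eval_Var: "mpoly_eval (Var i) x = x i"
  by (simp add: Var_def mpoly_eval_single mon_eval_def)

lemma mon_deg_superset: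
  assumes "finite S" "Poly_Mapping.keys a \<subseteq> S"
  shows "mon_deg a = (\<Sum>i\<in>S. Poly_Mapping.lookup a i)"
  unfolding mon_deg_def
  by (rule sum.mono_neutral_left) (use assms in \<open>auto simp: in_keys_iff\<close>)

lemma mon_deg_add: "mon_deg (a + b) = mon_deg a + mon_deg b"
proof -
  let ?S = "Poly_Mapping.keys a \<union> Poly_Mapping.keys b"
  have "mon_deg (a + b) = (\<Sum>i\<in>?S. Poly_Mapping.lookup (a + b) i)"
    by (rule mon_deg_superset) (auto simp: keys_add_nat)
  also have "\<dots> = (\<Sum>i\<in>?S. Poly_Mapping.lookup a i) + (\<Sum>i\<in>?S. Poly_Mapping.lookup b i)"
    by (simp add: lookup_add sum.distrib)
  also have "\<dots> = mon_deg a + mon_deg b"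
    by (subst (1 2) mon_deg_superset[of ?S]) auto
  finally show ?thesis .
qed

lemma mon_deg_0 [simp]: "mon_deg 0 = 0"
  by (simp add: mon_deg_def)

lemma mon_deg_single: "mon_deg (Poly_Mapping.single i k) = k"
  by (simp add: mon_deg_def)

lemma mon_deg_eq_0_iff: "mon_deg a = 0 \<longleftrightarrow> a = 0"
proof
  assume "mon_deg a = 0"
  then have "\<forall>i. Poly_Mapping.lookup a i = 0"
    unfolding mon_deg_def by (metis finite_keys in_keys_iff sum_eq_0_iff)
  then show "a = 0" by (intro poly_mapping_eqI) simp
qed simp

lemma monomial_remove_var:
  fixes a :: "nat \<Rightarrow>\<^sub>0 nat"
  assumes j: "j \<in> Poly_Mapping.keys a"
  shows "a = (a - Poly_Mapping.single j 1) + Poly_Mapping.single j 1"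
    and "Poly_Mapping.keys (a - Poly_Mapping.single j 1) \<subseteq> Poly_Mapping.keys a"
proof -
  have "Poly_Mapping.lookup a j \<ge> 1" using j by (simp add: in_keys_iff)
  then show "a = (a - Poly_Mapping.single j 1) + Poly_Mapping.single j 1"
    by (intro poly_mapping_eqI) (auto simp: lookup_add lookup_minus lookup_single when_def)
  show "Poly_Mapping.keys (a - Poly_Mapping.single j 1) \<subseteq> Poly_Mapping.keys a"
    by (auto simp: in_keys_iff lookup_minus)
qed

definition const_poly :: "complex \<Rightarrow> mpoly" where
  "const_poly c = Poly_Mapping.single 0 c"

lemma const_poly_0 [simp]: "const_poly 0 = 0"
  unfolding const_poly_def by simp

lemma const_poly_1 [simp]: "const_poly 1 = 1"
  unfolding const_poly_def by simp

lemma const_poly_add: "const_poly (a + b) = const_poly a + const_poly b"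
  unfolding const_poly_def by (simp add: single_add)

lemma const_poly_mult: "const_poly (a * b) = const_poly a * const_poly b"
  unfolding const_poly_def by (simp add: mult_single)

lemma mpoly_eval_const_poly [simp]: "mpoly_eval (const_poly c) x = c"
  unfolding const_poly_def by (simp add: mpoly_eval_single)

lemma single_eq_const_poly_mult: "Poly_Mapping.single a c = const_poly c * Poly_Mapping.single a 1"
  unfolding const_poly_def by (simp add: mult_single)

lemma single_mult_Var:
  "Poly_Mapping.single a 1 * Var j = Poly_Mapping.single (a + Poly_Mapping.single j 1) (1::complex)"
  unfolding Var_def by (simp add: mult_single)

lemma in_S_0 [simp]: "in_S r 0"
  by (simp add: in_S_def)

lemma in_S_1 [simp]: "in_S r 1"
  by (simp add: in_S_def)

lemma in_S_add: "in_S r f \<Longrightarrow> in_S r g \<Longrightarrow> in_S r (f + g)"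
  unfolding in_S_def using keys_add[of f g] by blast

lemma in_S_uminus: "in_S r f \<Longrightarrow> in_S r (- f)"
  unfolding in_S_def by simp

lemma in_S_diff: "in_S r f \<Longrightarrow> in_S r g \<Longrightarrow> in_S r (f - g)"
  unfolding in_S_def using keys_diff[of f g] by blast

lemma in_S_mult: "in_S r f \<Longrightarrow> in_S r g \<Longrightarrow> in_S r (f * g)"
  unfolding in_S_def using keys_mult[of f g] by (fastforce simp: keys_add_nat)

lemma in_S_power: "in_S r f \<Longrightarrow> in_S r (f ^ n)"
  by (induction n) (simp_all add: in_S_mult)

lemma in_S_single: "Poly_Mapping.keys a \<subseteq> {..r} \<Longrightarrow> in_S r (Poly_Mapping.single a c)"
  unfolding in_S_def by simp

lemma in_S_Var: "i \<le> r \<Longrightarrow> in_S r (Var i)"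
  unfolding Var_def by (rule in_S_single) simp

lemma in_S_const_poly [simp]: "in_S r (const_poly c)"
  unfolding const_poly_def by (rule in_S_single) simp

lemma in_S_add_single_D:
  assumes "a \<notin> Poly_Mapping.keys f" "c \<noteq> 0" "in_S r (f + Poly_Mapping.single a c)"
  shows "in_S r f" "Poly_Mapping.keys a \<subseteq> {..r}"
  using assms unfolding in_S_def by (auto simp: keys_add_single)

lemma homog_0 [simp]: "homog d 0"
  by (simp add: homog_def)

lemma homog_1 [simp]: "homog 0 1"
  unfolding homog_def by simp

lemma homog_add: "homog d f \<Longrightarrow> homog d g \<Longrightarrow> homog d (f + g)"
  unfolding homog_def using keys_add[of f g] by blast

lemma homog_uminus: "homog d f \<Longrightarrow> homog d (- f)"
  unfolding homog_def by simp

lemma homog_diff: "homog d f \<Longrightarrow> homog d g \<Longrightarrow> homog d (f - g)"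
  unfolding homog_def using keys_diff[of f g] by blast

lemma homog_mult: "homog d f \<Longrightarrow> homog e g \<Longrightarrow> homog (d + e) (f * g)"
  unfolding homog_def using keys_mult[of f g] by (fastforce simp: mon_deg_add)

lemma homog_power: "homog d f \<Longrightarrow> homog (n * d) (f ^ n)"
  by (induction n) (simp_all add: homog_mult)

lemma homog_single: "mon_deg a = d \<Longrightarrow> homog d (Poly_Mapping.single a c)"
  unfolding homog_def by simp

lemma homog_Var: "homog 1 (Var i)"
  unfolding Var_def by (rule homog_single) (simp add: mon_deg_single)

lemma homog_const_poly [simp]: "homog 0 (const_poly c)"
  unfolding const_poly_def by (rule homog_single) simp

lemma homog_const_poly_mult: "homog d f \<Longrightarrow> homog d (const_poly c * f)"
  using homog_mult[OF homog_const_poly, of d f c] by simp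

lemma homog_add_single_D:
  assumes "a \<notin> Poly_Mapping.keys f" "c \<noteq> 0" "homog d (f + Poly_Mapping.single a c)"
  shows "homog d f" "mon_deg a = d"
  using assms unfolding homog_def by (auto simp: keys_add_single)

section \<open>The homogeneous localization is a commutative ring\<close>

definition denominators :: "nat \<Rightarrow> (nat \<Rightarrow> complex) \<Rightarrow> mpoly set" where
  "denominators r p = {s. in_S r s \<and> (\<exists>d. homog d s) \<and> mpoly_eval s p \<noteq> 0}"

definition frac_eqv :: "nat \<Rightarrow> mpoly set \<Rightarrow> (nat \<Rightarrow> complex) \<Rightarrow> mpoly \<times> mpoly \<Rightarrow> mpoly \<times> mpoly \<Rightarrow> bool" where
  "frac_eqv r I p x y \<longleftrightarrow> (\<exists>s\<in>denominators r p. s * (fst x * snd y - fst y * snd x) \<in> I)"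

definition frac_mult :: "mpoly \<times> mpoly \<Rightarrow> mpoly \<times> mpoly \<Rightarrow> mpoly \<times> mpoly" where
  "frac_mult x y = (fst x * fst y, snd x * snd y)"

definition frac_add :: "mpoly \<times> mpoly \<Rightarrow> mpoly \<times> mpoly \<Rightarrow> mpoly \<times> mpoly" where
  "frac_add x y = (fst x * snd y + fst y * snd x, snd x * snd y)"

lemma frac_cls_eqv: "frac_cls r I p x = {y \<in> frac_dom r p. frac_eqv r I p x y}"
  unfolding frac_cls_def frac_eqv_def denominators_def by auto

lemma denominators_1 [simp]: "1 \<in> denominators r p"
  unfolding denominators_def by (auto intro: homog_1)

lemma denominators_mult:
  "s \<in> denominators r p \<Longrightarrow> t \<in> denominators r p \<Longrightarrow> s * t \<in> denominators r p"
  unfolding denominators_def by (auto simp: in_S_mult mpoly_eval_mult intro: homog_mult)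

lemma frac_domD:
  assumes "x \<in> frac_dom r p"
  shows "in_S r (fst x)" "in_S r (snd x)" "mpoly_eval (snd x) p \<noteq> 0"
    "\<exists>d. homog d (fst x) \<and> homog d (snd x)"
  using assms unfolding frac_dom_def by auto

lemma frac_dom_snd_denominators: "x \<in> frac_dom r p \<Longrightarrow> snd x \<in> denominators r p"
  unfolding frac_dom_def denominators_def by auto

lemma frac_domI:
  "in_S r f \<Longrightarrow> in_S r g \<Longrightarrow> homog d f \<Longrightarrow> homog d g \<Longrightarrow> mpoly_eval g p \<noteq> 0 \<Longrightarrow> (f, g) \<in> frac_dom r p"
  unfolding frac_dom_def by auto

lemma frac_mult_dom: "x \<in> frac_dom r p \<Longrightarrow> y \<in> frac_dom r p \<Longrightarrow> frac_mult x y \<in> frac_dom r p"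
proof -
  assume x: "x \<in> frac_dom r p" and y: "y \<in> frac_dom r p"
  obtain d where d: "homog d (fst x)" "homog d (snd x)" using frac_domD(4)[OF x] by blast
  obtain e where e: "homog e (fst y)" "homog e (snd y)" using frac_domD(4)[OF y] by blast
  show ?thesis unfolding frac_mult_def
    using frac_domD[OF x] frac_domD[OF y] homog_mult[OF d(1) e(1)] homog_mult[OF d(2) e(2)]
    by (intro frac_domI) (auto simp: in_S_mult mpoly_eval_mult)
qed

lemma frac_add_dom: "x \<in> frac_dom r p \<Longrightarrow> y \<in> frac_dom r p \<Longrightarrow> frac_add x y \<in> frac_dom r p"
proof -
  assume x: "x \<in> frac_dom r p" and y: "y \<in> frac_dom r p"
  obtain d where d: "homog d (fst x)" "homog d (snd x)" using frac_domD(4)[OF x] by blast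
  obtain e where e: "homog e (fst y)" "homog e (snd y)" using frac_domD(4)[OF y] by blast
  have "homog (d + e) (fst x * snd y + fst y * snd x)"
    using homog_mult[OF d(1) e(2)] homog_mult[OF e(1) d(2)] by (simp add: add.commute homog_add)
  moreover have "homog (d + e) (snd x * snd y)" using homog_mult[OF d(2) e(2)] .
  ultimately show ?thesis unfolding frac_add_def
    using frac_domD[OF x] frac_domD[OF y]
    by (intro frac_domI) (auto simp: in_S_mult in_S_add mpoly_eval_mult)
qed

lemma frac_uminus_dom: "x \<in> frac_dom r p \<Longrightarrow> (- fst x, snd x) \<in> frac_dom r p"
  using frac_domD[of x r p] by (auto intro!: frac_domI simp: in_S_uminus dest: homog_uminus)

lemma frac_one_dom: "(1, 1) \<in> frac_dom r p"
  by (rule frac_domI[where d=0]) auto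

lemma frac_zero_dom: "(0, 1) \<in> frac_dom r p"
  by (rule frac_domI[where d=0]) auto

lemma frac_const_dom: "(const_poly c, 1) \<in> frac_dom r p"
  by (rule frac_domI[where d=0]) auto

locale homogeneous_localization =
  fixes r :: nat and I :: "mpoly set" and p :: "nat \<Rightarrow> complex"
  assumes S_ideal: "S_ideal r I"
begin

abbreviation "Fr \<equiv> frac_dom r p"
abbreviation "cls \<equiv> frac_cls r I p"
abbreviation "eqv \<equiv> frac_eqv r I p"
abbreviation "Rp \<equiv> local_ring r I p"

lemma I_0: "0 \<in> I"
  using S_ideal unfolding S_ideal_def by blast

lemma I_add: "f \<in> I \<Longrightarrow> g \<in> I \<Longrightarrow> f + g \<in> I"
  using S_ideal unfolding S_ideal_def by blast

lemma I_mult: "f \<in> I \<Longrightarrow> in_S r g \<Longrightarrow> g * f \<in> I"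
  using S_ideal unfolding S_ideal_def by blast

lemma eqv_refl: "eqv x x"
  unfolding frac_eqv_def using I_0 denominators_1 by fastforce

lemma eqv_sym: "eqv x y \<Longrightarrow> eqv y x"
proof -
  assume "eqv x y"
  then obtain s where s: "s \<in> denominators r p" "s * (fst x * snd y - fst y * snd x) \<in> I"
    unfolding frac_eqv_def by blast
  then have "(- 1) * (s * (fst x * snd y - fst y * snd x)) \<in> I"
    using I_mult[OF s(2), of "- 1"] by (simp add: in_S_uminus)
  then show "eqv y x"
    unfolding frac_eqv_def using s(1) by (auto simp: algebra_simps)
qed

lemma eqv_trans:
  assumes xy: "eqv x y" and yz: "eqv y z" and x: "x \<in> Fr" and y: "y \<in> Fr" and z: "z \<in> Fr"
  shows "eqv x z"
proof -
  obtain s1 where s1: "s1 \<in> denominators r p" "s1 * (fst x * snd y - fst y * snd x) \<in> I"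
    using xy unfolding frac_eqv_def by blast
  obtain s2 where s2: "s2 \<in> denominators r p" "s2 * (fst y * snd z - fst z * snd y) \<in> I"
    using yz unfolding frac_eqv_def by blast
  have "s1 * s2 * snd y * (fst x * snd z - fst z * snd x)
      = (s2 * snd z) * (s1 * (fst x * snd y - fst y * snd x))
        + (s1 * snd x) * (s2 * (fst y * snd z - fst z * snd y))"
    by (simp add: algebra_simps)
  also have "\<dots> \<in> I"
    using s1 s2 frac_domD[OF x] frac_domD[OF z] unfolding denominators_def
    by (intro I_add I_mult[OF s1(2)] I_mult[OF s2(2)]) (auto simp: in_S_mult)
  finally show ?thesis
    unfolding frac_eqv_def
    using denominators_mult[OF denominators_mult[OF s1(1) s2(1)] frac_dom_snd_denominators[OF y]]
    by blast
qed

lemma cls_eq_iff: "x \<in> Fr \<Longrightarrow> y \<in> Fr \<Longrightarrow> cls x = cls y \<longleftrightarrow> eqv x y"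
  unfolding frac_cls_eqv using eqv_refl eqv_sym eqv_trans by blast

lemma cls_eqI: "x \<in> Fr \<Longrightarrow> y \<in> Fr \<Longrightarrow> fst x * snd y = fst y * snd x \<Longrightarrow> cls x = cls y"
  unfolding cls_eq_iff frac_eqv_def using I_0 denominators_1 by fastforce

lemma rep_in_Fr: "x \<in> Fr \<Longrightarrow> frac_rep (cls x) \<in> Fr"
  and eqv_rep: "x \<in> Fr \<Longrightarrow> eqv x (frac_rep (cls x))"
proof -
  assume x: "x \<in> Fr"
  have "frac_rep (cls x) \<in> cls x"
    unfolding frac_rep_def by (rule someI[of _ x]) (simp add: frac_cls_eqv x eqv_refl)
  then show "frac_rep (cls x) \<in> Fr" "eqv x (frac_rep (cls x))"
    unfolding frac_cls_eqv by auto
qed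

lemma frac_mult_cong:
  assumes "eqv x x'" "eqv y y'" "x \<in> Fr" "x' \<in> Fr" "y \<in> Fr" "y' \<in> Fr"
  shows "eqv (frac_mult x y) (frac_mult x' y')"
proof -
  obtain s1 where s1: "s1 \<in> denominators r p" "s1 * (fst x * snd x' - fst x' * snd x) \<in> I"
    using assms(1) unfolding frac_eqv_def by blast
  obtain s2 where s2: "s2 \<in> denominators r p" "s2 * (fst y * snd y' - fst y' * snd y) \<in> I"
    using assms(2) unfolding frac_eqv_def by blast
  have "s1 * s2 * (fst (frac_mult x y) * snd (frac_mult x' y') - fst (frac_mult x' y') * snd (frac_mult x y))
     = (s2 * fst y * snd y') * (s1 * (fst x * snd x' - fst x' * snd x))
       + (s1 * fst x' * snd x) * (s2 * (fst y * snd y' - fst y' * snd y))"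
    unfolding frac_mult_def by (simp add: algebra_simps)
  also have "\<dots> \<in> I"
    using s1 s2 assms(3-6)[THEN frac_domD(1)] assms(3-6)[THEN frac_domD(2)]
    unfolding denominators_def by (intro I_add I_mult[OF s1(2)] I_mult[OF s2(2)]) (auto simp: in_S_mult)
  finally show ?thesis
    unfolding frac_eqv_def using denominators_mult[OF s1(1) s2(1)] by blast
qed

lemma frac_add_cong:
  assumes "eqv x x'" "eqv y y'" "x \<in> Fr" "x' \<in> Fr" "y \<in> Fr" "y' \<in> Fr"
  shows "eqv (frac_add x y) (frac_add x' y')"
proof -
  obtain s1 where s1: "s1 \<in> denominators r p" "s1 * (fst x * snd x' - fst x' * snd x) \<in> I"
    using assms(1) unfolding frac_eqv_def by blast
  obtain s2 where s2: "s2 \<in> denominators r p" "s2 * (fst y * snd y' - fst y' * snd y) \<in> I"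
    using assms(2) unfolding frac_eqv_def by blast
  have "s1 * s2 * (fst (frac_add x y) * snd (frac_add x' y') - fst (frac_add x' y') * snd (frac_add x y))
     = (s2 * snd y * snd y') * (s1 * (fst x * snd x' - fst x' * snd x))
       + (s1 * snd x * snd x') * (s2 * (fst y * snd y' - fst y' * snd y))"
    unfolding frac_add_def by (simp add: algebra_simps)
  also have "\<dots> \<in> I"
    using s1 s2 assms(3-6)[THEN frac_domD(2)]
    unfolding denominators_def by (intro I_add I_mult[OF s1(2)] I_mult[OF s2(2)]) (auto simp: in_S_mult)
  finally show ?thesis
    unfolding frac_eqv_def using denominators_mult[OF s1(1) s2(1)] by blast
qed

lemma carrier_local_ring: "carrier Rp = cls ` Fr"
  unfolding local_ring_def by simp

lemma cls_in_carrier: "x \<in> Fr \<Longrightarrow> cls x \<in> carrier Rp"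
  unfolding carrier_local_ring by blast

lemma carrier_local_ringE: "A \<in> carrier Rp \<Longrightarrow> (\<And>x. x \<in> Fr \<Longrightarrow> A = cls x \<Longrightarrow> P) \<Longrightarrow> P"
  unfolding carrier_local_ring by blast

lemma one_local_ring: "\<one>\<^bsub>Rp\<^esub> = cls (1, 1)"
  unfolding local_ring_def by simp

lemma zero_local_ring: "\<zero>\<^bsub>Rp\<^esub> = cls (0, 1)"
  unfolding local_ring_def by simp

lemma cls_mult: "x \<in> Fr \<Longrightarrow> y \<in> Fr \<Longrightarrow> cls x \<otimes>\<^bsub>Rp\<^esub> cls y = cls (frac_mult x y)"
  unfolding local_ring_def frac_mult_def[symmetric] monoid.simps
  by (subst cls_eq_iff)
     (auto intro!: frac_mult_dom rep_in_Fr frac_mult_cong eqv_sym[OF eqv_rep])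

lemma cls_add: "x \<in> Fr \<Longrightarrow> y \<in> Fr \<Longrightarrow> cls x \<oplus>\<^bsub>Rp\<^esub> cls y = cls (frac_add x y)"
  unfolding local_ring_def frac_add_def[symmetric] ring.simps
  by (subst cls_eq_iff)
     (auto intro!: frac_add_dom rep_in_Fr frac_add_cong eqv_sym[OF eqv_rep])

lemma abelian_group_local_ring: "abelian_group Rp"
proof (rule abelian_groupI)
  fix A B assume "A \<in> carrier Rp" "B \<in> carrier Rp"
  then show "A \<oplus>\<^bsub>Rp\<^esub> B \<in> carrier Rp"
    by (elim carrier_local_ringE) (simp add: cls_add cls_in_carrier frac_add_dom)
next
  show "\<zero>\<^bsub>Rp\<^esub> \<in> carrier Rp" by (simp add: zero_local_ring cls_in_carrier frac_zero_dom)
next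
  fix A B C assume "A \<in> carrier Rp" "B \<in> carrier Rp" "C \<in> carrier Rp"
  then show "A \<oplus>\<^bsub>Rp\<^esub> B \<oplus>\<^bsub>Rp\<^esub> C = A \<oplus>\<^bsub>Rp\<^esub> (B \<oplus>\<^bsub>Rp\<^esub> C)"
    by (elim carrier_local_ringE)
       (simp add: cls_add frac_add_dom, rule cls_eqI, simp_all add: frac_add_dom, simp add: frac_add_def algebra_simps)
next
  fix A B assume "A \<in> carrier Rp" "B \<in> carrier Rp"
  then show "A \<oplus>\<^bsub>Rp\<^esub> B = B \<oplus>\<^bsub>Rp\<^esub> A"
    by (elim carrier_local_ringE)
       (simp add: cls_add, rule cls_eqI, simp_all add: frac_add_dom, simp add: frac_add_def algebra_simps)
next
  fix A assume "A \<in> carrier Rp"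
  then show "\<zero>\<^bsub>Rp\<^esub> \<oplus>\<^bsub>Rp\<^esub> A = A"
    by (elim carrier_local_ringE)
       (simp add: zero_local_ring cls_add frac_zero_dom, rule cls_eqI, auto simp: frac_add_dom frac_zero_dom frac_add_def)
next
  fix A assume "A \<in> carrier Rp"
  then show "\<exists>B\<in>carrier Rp. B \<oplus>\<^bsub>Rp\<^esub> A = \<zero>\<^bsub>Rp\<^esub>"
  proof (elim carrier_local_ringE)
    fix x assume x: "x \<in> Fr" and A: "A = cls x"
    have "cls (- fst x, snd x) \<oplus>\<^bsub>Rp\<^esub> A = \<zero>\<^bsub>Rp\<^esub>"
      unfolding A zero_local_ring cls_add[OF frac_uminus_dom[OF x] x]
      by (rule cls_eqI) (simp_all add: x frac_add_dom frac_uminus_dom frac_zero_dom, simp add: frac_add_def)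
    then show ?thesis using cls_in_carrier[OF frac_uminus_dom[OF x]] by blast
  qed
qed

lemma comm_monoid_local_ring: "comm_monoid Rp"
proof (rule comm_monoidI)
  fix A B assume "A \<in> carrier Rp" "B \<in> carrier Rp"
  then show "A \<otimes>\<^bsub>Rp\<^esub> B \<in> carrier Rp"
    by (elim carrier_local_ringE) (simp add: cls_mult cls_in_carrier frac_mult_dom)
next
  show "\<one>\<^bsub>Rp\<^esub> \<in> carrier Rp" by (simp add: one_local_ring cls_in_carrier frac_one_dom)
next
  fix A B C assume "A \<in> carrier Rp" "B \<in> carrier Rp" "C \<in> carrier Rp"
  then show "A \<otimes>\<^bsub>Rp\<^esub> B \<otimes>\<^bsub>Rp\<^esub> C = A \<otimes>\<^bsub>Rp\<^esub> (B \<otimes>\<^bsub>Rp\<^esub> C)"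
    by (elim carrier_local_ringE)
       (simp add: cls_mult frac_mult_dom, rule cls_eqI, simp_all add: frac_mult_dom, simp add: frac_mult_def algebra_simps)
next
  fix A assume "A \<in> carrier Rp"
  then show "\<one>\<^bsub>Rp\<^esub> \<otimes>\<^bsub>Rp\<^esub> A = A"
    by (elim carrier_local_ringE)
       (simp add: one_local_ring cls_mult frac_one_dom, rule cls_eqI, auto simp: frac_mult_dom frac_one_dom frac_mult_def)
next
  fix A B assume "A \<in> carrier Rp" "B \<in> carrier Rp"
  then show "A \<otimes>\<^bsub>Rp\<^esub> B = B \<otimes>\<^bsub>Rp\<^esub> A"
    by (elim carrier_local_ringE)
       (simp add: cls_mult, rule cls_eqI, simp_all add: frac_mult_dom, simp add: frac_mult_def algebra_simps)
qed

lemma cring_local_ring: "cring Rp"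
proof (rule cringI[OF abelian_group_local_ring comm_monoid_local_ring])
  fix A B C assume "A \<in> carrier Rp" "B \<in> carrier Rp" "C \<in> carrier Rp"
  then show "(A \<oplus>\<^bsub>Rp\<^esub> B) \<otimes>\<^bsub>Rp\<^esub> C = A \<otimes>\<^bsub>Rp\<^esub> C \<oplus>\<^bsub>Rp\<^esub> B \<otimes>\<^bsub>Rp\<^esub> C"
    by (elim carrier_local_ringE)
       (simp add: cls_mult cls_add frac_mult_dom frac_add_dom, rule cls_eqI,
        simp_all add: frac_mult_dom frac_add_dom, simp add: frac_mult_def frac_add_def algebra_simps)
qed

end

section \<open>Ideals of a commutative ring: products, sums and Nakayama's lemma\<close>

lemma (in ring) ideal_pow_ideal: "ideal I R \<Longrightarrow> ideal (ideal_pow R I k) R"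
  by (induction k) (simp_all add: oneideal ideal_prod_is_ideal)

context cring
begin

lemma set_add_mem_iff: "x \<in> I <+>\<^bsub>R\<^esub> J \<longleftrightarrow> (\<exists>i\<in>I. \<exists>j\<in>J. x = i \<oplus> j)"
  by (auto simp: set_add_def')

lemma set_add_memI: "i \<in> I \<Longrightarrow> j \<in> J \<Longrightarrow> x = i \<oplus> j \<Longrightarrow> x \<in> I <+>\<^bsub>R\<^esub> J"
  unfolding set_add_mem_iff by blast

lemma set_add_mono: "I \<subseteq> I' \<Longrightarrow> J \<subseteq> J' \<Longrightarrow> I <+>\<^bsub>R\<^esub> J \<subseteq> I' <+>\<^bsub>R\<^esub> J'"
  unfolding set_add_mem_iff subset_iff by blast

lemma set_add_assoc:
  assumes "A \<subseteq> carrier R" "B \<subseteq> carrier R" "C \<subseteq> carrier R"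
  shows "(A <+>\<^bsub>R\<^esub> B) <+>\<^bsub>R\<^esub> C = A <+>\<^bsub>R\<^esub> (B <+>\<^bsub>R\<^esub> C)"
proof (intro equalityI subsetI)
  fix w assume "w \<in> (A <+>\<^bsub>R\<^esub> B) <+>\<^bsub>R\<^esub> C"
  then obtain x y z where xyz: "x \<in> A" "y \<in> B" "z \<in> C" "w = x \<oplus> y \<oplus> z"
    unfolding set_add_def' by blast
  have "x \<in> carrier R" "y \<in> carrier R" "z \<in> carrier R" using xyz assms by auto
  then have "w = x \<oplus> (y \<oplus> z)" using xyz(4) by (simp add: a_assoc)
  then show "w \<in> A <+>\<^bsub>R\<^esub> (B <+>\<^bsub>R\<^esub> C)"
    using set_add_memI[OF xyz(1) set_add_memI[OF xyz(2,3) refl]] by simp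
next
  fix w assume "w \<in> A <+>\<^bsub>R\<^esub> (B <+>\<^bsub>R\<^esub> C)"
  then obtain x y z where xyz: "x \<in> A" "y \<in> B" "z \<in> C" "w = x \<oplus> (y \<oplus> z)"
    unfolding set_add_def' by blast
  have "x \<in> carrier R" "y \<in> carrier R" "z \<in> carrier R" using xyz assms by auto
  then have "w = x \<oplus> y \<oplus> z" using xyz(4) by (simp add: a_assoc)
  then show "w \<in> (A <+>\<^bsub>R\<^esub> B) <+>\<^bsub>R\<^esub> C"
    using set_add_memI[OF set_add_memI[OF xyz(1,2) refl] xyz(3)] by simp
qed

lemma set_add_subset_ideal:
  assumes K: "ideal K R" and "I \<subseteq> K" "J \<subseteq> K"
  shows "I <+>\<^bsub>R\<^esub> J \<subseteq> K"
proof
  fix x assume "x \<in> I <+>\<^bsub>R\<^esub> J"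
  then obtain i j where "i \<in> I" "j \<in> J" "x = i \<oplus> j"
    unfolding set_add_mem_iff by blast
  then show "x \<in> K"
    using assms(2,3) additive_subgroup.a_closed[OF ideal.axioms(1)[OF K]] by blast
qed

lemma subset_set_add_left:
  assumes J: "ideal J R" and I: "I \<subseteq> carrier R"
  shows "I \<subseteq> I <+>\<^bsub>R\<^esub> J"
proof
  fix x assume "x \<in> I"
  moreover have "\<zero> \<in> J" using additive_subgroup.zero_closed[OF ideal.axioms(1)[OF J]] .
  moreover have "x = x \<oplus> \<zero>" using \<open>x \<in> I\<close> I by auto
  ultimately show "x \<in> I <+>\<^bsub>R\<^esub> J" by (rule set_add_memI)
qed

lemma subset_set_add_right:
  assumes I: "ideal I R" and J: "J \<subseteq> carrier R"
  shows "J \<subseteq> I <+>\<^bsub>R\<^esub> J"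
proof
  fix x assume "x \<in> J"
  have "\<zero> \<in> I" using additive_subgroup.zero_closed[OF ideal.axioms(1)[OF I]] .
  moreover note \<open>x \<in> J\<close>
  moreover have "x = \<zero> \<oplus> x" using \<open>x \<in> J\<close> J by auto
  ultimately show "x \<in> I <+>\<^bsub>R\<^esub> J" by (rule set_add_memI)
qed

lemma ideal_subset_carrier: "ideal I R \<Longrightarrow> I \<subseteq> carrier R"
  by (rule additive_subgroup.a_subset[OF ideal.axioms(1)])

lemma ideal_prod_mono:
  assumes "I \<subseteq> I'" "J \<subseteq> J'"
  shows "I \<cdot> J \<subseteq> I' \<cdot> J'"
proof
  fix x assume "x \<in> I \<cdot> J"
  then show "x \<in> I' \<cdot> J'"
    by (induction x rule: ideal_prod.induct) (use assms in \<open>auto intro: ideal_prod.intros\<close>)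
qed

lemma ideal_prod_subset_ideal:
  assumes "ideal K R" and "\<And>i j. i \<in> I \<Longrightarrow> j \<in> J \<Longrightarrow> i \<otimes> j \<in> K"
  shows "I \<cdot> J \<subseteq> K"
proof
  fix x assume "x \<in> I \<cdot> J"
  then show "x \<in> K"
    by (induction x rule: ideal_prod.induct)
       (auto intro: assms(2) additive_subgroup.a_closed[OF ideal.axioms(1)[OF assms(1)]])
qed

lemma ideal_prod_subset_right: "ideal I R \<Longrightarrow> ideal J R \<Longrightarrow> I \<cdot> J \<subseteq> J"
  using ideal_prod_inter by blast

lemma ideal_prod_cgenideal_subset:
  assumes I: "ideal I R" and a: "a \<in> carrier R"
  shows "I \<cdot> (PIdl a) \<subseteq> {b \<otimes> a | b. b \<in> I}"
proof
  fix x assume "x \<in> I \<cdot> (PIdl a)"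
  then show "x \<in> {b \<otimes> a | b. b \<in> I}"
  proof (induction x rule: ideal_prod.induct)
    case (prod i j)
    obtain y where y: "y \<in> carrier R" "j = y \<otimes> a" using prod(2) unfolding cgenideal_def by blast
    have "i \<otimes> j = (i \<otimes> y) \<otimes> a" using y ideal.Icarr[OF I prod(1)] a by (simp add: m_assoc)
    then show ?case using ideal.I_r_closed[OF I prod(1) y(1)] by blast
  next
    case (sum s1 s2)
    obtain b1 b2 where b: "b1 \<in> I" "s1 = b1 \<otimes> a" "b2 \<in> I" "s2 = b2 \<otimes> a"
      using sum.IH by blast
    have "s1 \<oplus> s2 = (b1 \<oplus> b2) \<otimes> a" using b ideal.Icarr[OF I] a by (simp add: l_distr)
    then show ?case using additive_subgroup.a_closed[OF ideal.axioms(1)[OF I] b(1,3)] by blast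
  qed
qed

lemma genideal_insert:
  assumes a: "a \<in> carrier R" and A: "A \<subseteq> carrier R"
  shows "Idl (insert a A) = PIdl a <+>\<^bsub>R\<^esub> Idl A"
proof
  have iP: "ideal (PIdl a) R" and iA: "ideal (Idl A) R"
    using cgenideal_ideal[OF a] genideal_ideal[OF A] .
  have "a \<in> PIdl a <+>\<^bsub>R\<^esub> Idl A"
    using cgenideal_self[OF a] subset_set_add_left[OF iA ideal_subset_carrier[OF iP]] by blast
  moreover have "A \<subseteq> PIdl a <+>\<^bsub>R\<^esub> Idl A"
    using genideal_self[OF A] subset_set_add_right[OF iP ideal_subset_carrier[OF iA]] by (rule order.trans)
  ultimately show "Idl (insert a A) \<subseteq> PIdl a <+>\<^bsub>R\<^esub> Idl A"
    by (intro genideal_minimal[OF add_ideals[OF iP iA]]) simp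
next
  have aA: "insert a A \<subseteq> carrier R" using a A by simp
  have "a \<in> Idl (insert a A)" using genideal_self[OF aA] by simp
  then have "PIdl a \<subseteq> Idl (insert a A)" by (rule cgenideal_minimal[OF genideal_ideal[OF aA]])
  moreover have "Idl A \<subseteq> Idl (insert a A)" using subset_Idl_subset[OF aA subset_insertI] .
  ultimately show "PIdl a <+>\<^bsub>R\<^esub> Idl A \<subseteq> Idl (insert a A)"
    by (rule set_add_subset_ideal[OF genideal_ideal[OF aA]])
qed

lemma max_ideal_subset_carrier: "max_ideal R \<subseteq> carrier R"
  unfolding max_ideal_def by blast

lemma one_minus_max_ideal_Units:
  assumes M: "ideal (max_ideal R) R" and b: "b \<in> max_ideal R"
  shows "\<one> \<ominus> b \<in> Units R"
proof -
  have bc: "b \<in> carrier R" using b max_ideal_subset_carrier by blast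
  have "\<one> \<ominus> b \<notin> max_ideal R"
  proof
    assume "\<one> \<ominus> b \<in> max_ideal R"
    then have "(\<one> \<ominus> b) \<oplus> b \<in> max_ideal R"
      using b by (simp add: additive_subgroup.a_closed ideal.axioms(1)[OF M])
    moreover have "(\<one> \<ominus> b) \<oplus> b = \<one>" using bc by algebra
    ultimately show False unfolding max_ideal_def by simp
  qed
  then show ?thesis unfolding max_ideal_def using bc by simp
qed

lemma mem_ideal_if_eq_add_max_ideal_mult:
  assumes M: "ideal (max_ideal R) R" and N: "ideal N R" and a: "a \<in> carrier R"
    and "n \<in> N" "b \<in> max_ideal R" "a = n \<oplus> b \<otimes> a"
  shows "a \<in> N"
proof -
  have bc: "b \<in> carrier R" using assms(5) max_ideal_subset_carrier by blast
  have nc: "n \<in> carrier R" using ideal.Icarr[OF N assms(4)] .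
  have un: "\<one> \<ominus> b \<in> Units R" using one_minus_max_ideal_Units[OF M assms(5)] .
  have "(\<one> \<ominus> b) \<otimes> a = n"
  proof -
    have "(\<one> \<ominus> b) \<otimes> a = a \<ominus> b \<otimes> a" using bc a by algebra
    also have "\<dots> = (n \<oplus> b \<otimes> a) \<ominus> b \<otimes> a"
      using arg_cong[OF assms(6), of "\<lambda>x. x \<ominus> b \<otimes> a"] by simp
    also have "\<dots> = n" using bc a nc by algebra
    finally show ?thesis .
  qed
  then have "inv (\<one> \<ominus> b) \<otimes> n = (inv (\<one> \<ominus> b) \<otimes> (\<one> \<ominus> b)) \<otimes> a"
    using un a by (simp only: m_assoc Units_closed Units_inv_closed)
  then have "a = inv (\<one> \<ominus> b) \<otimes> n"
    using un a by (simp add: Units_l_inv)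
  then show ?thesis using ideal.I_l_closed[OF N assms(4) Units_inv_closed[OF un]] by simp
qed

lemma mem_ideal_if_mem_set_add_max_ideal_prod:
  assumes M: "ideal (max_ideal R) R" and N: "ideal N R" and a: "a \<in> carrier R"
    and "a \<in> N <+>\<^bsub>R\<^esub> max_ideal R \<cdot> (N <+>\<^bsub>R\<^esub> PIdl a)"
  shows "a \<in> N"
proof -
  let ?M = "max_ideal R"
  have "a \<in> N <+>\<^bsub>R\<^esub> (?M \<cdot> N <+>\<^bsub>R\<^esub> ?M \<cdot> (PIdl a))"
    using assms(4) ideal_prod_distr(1)[OF M N cgenideal_ideal[OF a]] by simp
  then obtain n u w where nuw: "n \<in> N" "u \<in> ?M \<cdot> N" "w \<in> ?M \<cdot> (PIdl a)" "a = n \<oplus> (u \<oplus> w)"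
    unfolding set_add_def' by blast
  obtain b where b: "b \<in> ?M" "w = b \<otimes> a" using nuw(3) ideal_prod_cgenideal_subset[OF M a] by blast
  have u: "u \<in> N" using nuw(2) ideal_prod_subset_right[OF M N] by blast
  have "a = (n \<oplus> u) \<oplus> b \<otimes> a"
    using nuw(4) b ideal.Icarr[OF N nuw(1)] ideal.Icarr[OF N u] max_ideal_subset_carrier a
    by (auto simp: a_assoc)
  moreover have "n \<oplus> u \<in> N" using additive_subgroup.a_closed[OF ideal.axioms(1)[OF N] nuw(1) u] .
  ultimately show "a \<in> N" using mem_ideal_if_eq_add_max_ideal_mult[OF M N a _ b(1)] by blast
qed

lemma nakayama:
  assumes M: "ideal (max_ideal R) R" and A: "finite A" "A \<subseteq> carrier R"
  shows "ideal N R \<Longrightarrow> Idl A \<subseteq> N <+>\<^bsub>R\<^esub> max_ideal R \<cdot> (Idl A) \<Longrightarrow> Idl A \<subseteq> N"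
  using A
proof (induction A arbitrary: N rule: finite_induct)
  case empty
  show ?case by (rule genideal_minimal[OF empty.prems(1)]) simp
next
  case (insert a A N)
  let ?M = "max_ideal R"
  have a: "a \<in> carrier R" and A: "A \<subseteq> carrier R" using insert.prems(3) by auto
  have iP: "ideal (PIdl a) R" and iA: "ideal (Idl A) R" and iN: "ideal N R"
    using cgenideal_ideal[OF a] genideal_ideal[OF A] insert.prems(1) .
  have iNP: "ideal (N <+>\<^bsub>R\<^esub> PIdl a) R" using add_ideals[OF iN iP] .
  have ins: "Idl (insert a A) = PIdl a <+>\<^bsub>R\<^esub> Idl A" using genideal_insert[OF a A] .
  have carr: "N \<subseteq> carrier R" "?M \<cdot> (PIdl a) \<subseteq> carrier R" "?M \<cdot> (Idl A) \<subseteq> carrier R"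
    using ideal_subset_carrier[OF iN] ideal_prod_in_carrier[OF M iP] ideal_prod_in_carrier[OF M iA] .
  have "Idl A \<subseteq> Idl (insert a A)" using insert.prems(3) by (intro subset_Idl_subset) auto
  also have "\<dots> \<subseteq> N <+>\<^bsub>R\<^esub> ?M \<cdot> (PIdl a <+>\<^bsub>R\<^esub> Idl A)" using insert.prems(2) ins by simp
  also have "\<dots> = (N <+>\<^bsub>R\<^esub> ?M \<cdot> (PIdl a)) <+>\<^bsub>R\<^esub> ?M \<cdot> (Idl A)"
    using ideal_prod_distr(1)[OF M iP iA] set_add_assoc[OF carr] by simp
  also have "\<dots> \<subseteq> (N <+>\<^bsub>R\<^esub> PIdl a) <+>\<^bsub>R\<^esub> ?M \<cdot> (Idl A)"
    using ideal_prod_subset_right[OF M iP] by (intro set_add_mono) auto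
  finally have "Idl A \<subseteq> N <+>\<^bsub>R\<^esub> PIdl a" using insert.IH[OF iNP] A by blast
  then have sub: "Idl (insert a A) \<subseteq> N <+>\<^bsub>R\<^esub> PIdl a"
    unfolding ins using subset_set_add_right[OF iN ideal_subset_carrier[OF iP]]
    by (intro set_add_subset_ideal[OF iNP]) auto
  have "a \<in> Idl (insert a A)" using genideal_self insert.prems(3) by blast
  then have "a \<in> N <+>\<^bsub>R\<^esub> ?M \<cdot> (N <+>\<^bsub>R\<^esub> PIdl a)"
    using insert.prems(2) ideal_prod_mono[OF order.refl sub] by (blast dest: set_add_mono[OF order.refl])
  then have "a \<in> N" by (rule mem_ideal_if_mem_set_add_max_ideal_prod[OF M iN a])
  then have "N <+>\<^bsub>R\<^esub> PIdl a \<subseteq> N"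
    by (intro set_add_subset_ideal[OF iN order.refl cgenideal_minimal[OF iN]])
  then show ?case using sub by blast
qed

lemma ideal_colon:
  assumes K: "ideal K R" and a: "a \<in> carrier R"
  shows "ideal {y \<in> carrier R. a \<otimes> y \<in> K} R"
proof (rule idealI[OF ring_axioms])
  interpret K: ideal K R by (rule K)
  show "subgroup {y \<in> carrier R. a \<otimes> y \<in> K} (add_monoid R)"
  proof (rule add.subgroupI)
    show "{y \<in> carrier R. a \<otimes> y \<in> K} \<noteq> {}" using a by auto
  next
    fix y assume "y \<in> {y \<in> carrier R. a \<otimes> y \<in> K}"
    then show "\<ominus> y \<in> {y \<in> carrier R. a \<otimes> y \<in> K}" using a by (simp add: r_minus)
  next
    fix y z assume "y \<in> {y \<in> carrier R. a \<otimes> y \<in> K}" "z \<in> {y \<in> carrier R. a \<otimes> y \<in> K}"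
    then show "y \<oplus> z \<in> {y \<in> carrier R. a \<otimes> y \<in> K}" using a by (simp add: r_distr)
  qed auto
next
  fix y x assume "y \<in> {y \<in> carrier R. a \<otimes> y \<in> K}" "x \<in> carrier R"
  then have y: "y \<in> carrier R" "a \<otimes> y \<in> K" and x: "x \<in> carrier R" by auto
  have "a \<otimes> (x \<otimes> y) = x \<otimes> (a \<otimes> y)" "a \<otimes> (y \<otimes> x) = (a \<otimes> y) \<otimes> x"
    using a x y by (simp_all add: m_lcomm m_assoc)
  then show "x \<otimes> y \<in> {y \<in> carrier R. a \<otimes> y \<in> K}" "y \<otimes> x \<in> {y \<in> carrier R. a \<otimes> y \<in> K}"
    using x y ideal.I_l_closed[OF K y(2) x] ideal.I_r_closed[OF K y(2) x] by auto
qed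

lemma ideal_prod_genideal:
  assumes A: "A \<subseteq> carrier R" and B: "B \<subseteq> carrier R"
  shows "(Idl A) \<cdot> (Idl B) = Idl (A <#> B)"
proof
  have AB: "A <#> B \<subseteq> carrier R" using A B unfolding set_mult_def by auto
  have iAB: "ideal (Idl (A <#> B)) R" using genideal_ideal[OF AB] .
  have aB: "Idl B \<subseteq> {y \<in> carrier R. a \<otimes> y \<in> Idl (A <#> B)}" if a: "a \<in> A" for a
  proof (rule genideal_minimal[OF ideal_colon[OF iAB]])
    show "a \<in> carrier R" using a A by blast
    show "B \<subseteq> {y \<in> carrier R. a \<otimes> y \<in> Idl (A <#> B)}"
      using a B genideal_self[OF AB] unfolding set_mult_def by blast
  qed
  show "(Idl A) \<cdot> (Idl B) \<subseteq> Idl (A <#> B)"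
  proof (rule ideal_prod_subset_ideal[OF iAB])
    fix x y assume x: "x \<in> Idl A" and y: "y \<in> Idl B"
    have yc: "y \<in> carrier R" using y ideal_subset_carrier[OF genideal_ideal[OF B]] by blast
    have "A \<subseteq> {x \<in> carrier R. y \<otimes> x \<in> Idl (A <#> B)}"
    proof
      fix a assume a: "a \<in> A"
      then have "a \<otimes> y \<in> Idl (A <#> B)" "a \<in> carrier R" using aB[OF a] y A by auto
      then show "a \<in> {x \<in> carrier R. y \<otimes> x \<in> Idl (A <#> B)}" using yc by (simp add: m_comm)
    qed
    then have "Idl A \<subseteq> {x \<in> carrier R. y \<otimes> x \<in> Idl (A <#> B)}"
      by (rule genideal_minimal[OF ideal_colon[OF iAB yc]])
    then show "x \<otimes> y \<in> Idl (A <#> B)" using x yc by (auto simp: m_comm)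
  qed
  have "A <#> B \<subseteq> (Idl A) \<cdot> (Idl B)"
    using genideal_self[OF A] genideal_self[OF B] unfolding set_mult_def
    by (auto intro: ideal_prod.prod)
  then show "Idl (A <#> B) \<subseteq> (Idl A) \<cdot> (Idl B)"
    by (rule genideal_minimal[OF ideal_prod_is_ideal[OF genideal_ideal[OF A] genideal_ideal[OF B]]])
qed

lemma ideal_pow_antimono:
  assumes "ideal I R" "n \<le> k"
  shows "ideal_pow R I k \<subseteq> ideal_pow R I n"
  using assms(2)
proof (induction k)
  case (Suc k)
  then show ?case
    using ideal_prod_subset_right[OF assms(1) ideal_pow_ideal[OF assms(1)], of k]
    by (cases "n = Suc k") auto
qed simp

lemma loewy_length_le:
  assumes M: "ideal (max_ideal R) R" and nontrivial: "\<one> \<noteq> \<zero>"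
    and nilpotent: "ideal_pow R (max_ideal R) m \<subseteq> {\<zero>}"
  shows "loewy_length R \<le> m - 1"
proof -
  let ?S = "{i. ideal_pow R (max_ideal R) i \<noteq> {\<zero>}}"
  have lt: "i < m" if "i \<in> ?S" for i
  proof (rule ccontr)
    assume "\<not> i < m"
    then have "ideal_pow R (max_ideal R) i \<subseteq> {\<zero>}"
      using ideal_pow_antimono[OF M, of m i] nilpotent by auto
    moreover have "\<zero> \<in> ideal_pow R (max_ideal R) i"
      using additive_subgroup.zero_closed[OF ideal.axioms(1)[OF ideal_pow_ideal[OF M]]] .
    ultimately show False using that by blast
  qed
  have fin: "finite ?S" using lt by (intro finite_subset[of ?S "{..<m}"]) auto
  have "0 \<in> ?S"
    using nontrivial one_closed by (simp only: mem_Collect_eq ideal_pow.simps(1)) (metis singletonD)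
  then have "Max ?S \<in> ?S" using Max_in[OF fin] by (metis empty_iff)
  then show ?thesis unfolding loewy_length_def using lt by fastforce
qed

lemma ideal_pow_genideal_finite:
  assumes "finite B" "B \<subseteq> carrier R"
  shows "\<exists>A. finite A \<and> A \<subseteq> carrier R \<and> ideal_pow R (Idl B) k = Idl A"
proof (induction k)
  case 0
  show ?case by (rule exI[of _ "{\<one>}"]) (simp add: genideal_one)
next
  case (Suc k)
  then obtain A where A: "finite A" "A \<subseteq> carrier R" "ideal_pow R (Idl B) k = Idl A" by blast
  have "ideal_pow R (Idl B) (Suc k) = Idl (B <#> A)"
    using A(3) ideal_prod_genideal[OF assms(2) A(2)] by simp
  moreover have "finite (B <#> A)" "B <#> A \<subseteq> carrier R"
    using assms A unfolding set_mult_def by auto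
  ultimately show ?case by blast
qed

end

section \<open>Existence of minimal reductions\<close>

context cring
begin

lemma ideal_minus_closed: "ideal J R \<Longrightarrow> x \<in> J \<Longrightarrow> y \<in> J \<Longrightarrow> x \<ominus> y \<in> J"
  unfolding a_minus_def
  by (intro additive_subgroup.a_closed[OF ideal.axioms(1)] additive_subgroup.a_inv_closed[OF ideal.axioms(1)])

lemma is_reduction_of_max_if_subset:
  assumes M: "ideal (max_ideal R) R" and B: "finite B" "B \<subseteq> carrier R" "max_ideal R = Idl B"
    and red: "is_reduction_of_max R J"
    and F: "finite F" "F \<subseteq> max_ideal R"
    and K: "ideal K R" "K \<subseteq> max_ideal R"
    and sub: "J \<subseteq> Idl F <+>\<^bsub>R\<^esub> max_ideal R \<cdot> K"
  shows "is_reduction_of_max R (Idl F)"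
proof -
  let ?M = "max_ideal R"
  have iF: "ideal (Idl F) R" using genideal_ideal F(2) max_ideal_subset_carrier by blast
  have FM: "Idl F \<subseteq> ?M" using genideal_minimal[OF M F(2)] .
  obtain k where k: "ideal_pow R ?M (Suc k) = J \<cdot> ideal_pow R ?M k"
    using red unfolding is_reduction_of_max_def by blast
  define Q where "Q = ideal_pow R ?M k"
  define P where "P = ideal_pow R ?M (Suc k)"
  have iQ: "ideal Q R" and iMK: "ideal (?M \<cdot> K) R"
    unfolding Q_def using ideal_pow_ideal[OF M] ideal_prod_is_ideal[OF M K(1)] by auto
  have PMQ: "P = ?M \<cdot> Q" unfolding P_def Q_def by simp
  have "P = J \<cdot> Q" unfolding P_def Q_def using k .
  also have "\<dots> \<subseteq> (Idl F <+>\<^bsub>R\<^esub> ?M \<cdot> K) \<cdot> Q" using ideal_prod_mono[OF sub order.refl] .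
  also have "\<dots> = (Idl F) \<cdot> Q <+>\<^bsub>R\<^esub> (?M \<cdot> K) \<cdot> Q" using ideal_prod_distr(2)[OF iQ iF iMK] .
  also have "(?M \<cdot> K) \<cdot> Q = ?M \<cdot> (K \<cdot> Q)" using ideal_prod_assoc[OF M K(1) iQ] .
  also have "?M \<cdot> (K \<cdot> Q) \<subseteq> ?M \<cdot> P"
    unfolding PMQ using ideal_prod_mono[OF order.refl ideal_prod_mono[OF K(2) order.refl]] .
  finally have "P \<subseteq> (Idl F) \<cdot> Q <+>\<^bsub>R\<^esub> ?M \<cdot> P" using set_add_mono[OF order.refl] by blast
  moreover obtain A where A: "finite A" "A \<subseteq> carrier R" "P = Idl A"
    using ideal_pow_genideal_finite[OF B(1,2)] B(3) unfolding P_def by metis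
  ultimately have "P \<subseteq> (Idl F) \<cdot> Q"
    using nakayama[OF M A(1,2) ideal_prod_is_ideal[OF iF iQ]] by simp
  moreover have "(Idl F) \<cdot> Q \<subseteq> P" unfolding PMQ using ideal_prod_mono[OF FM order.refl] .
  ultimately show ?thesis unfolding is_reduction_of_max_def P_def Q_def using iF FM by auto
qed

lemma genideal_insert_set_add_cases:
  assumes "f \<in> carrier R" "G \<subseteq> carrier R" "x \<in> Idl (insert f G) <+>\<^bsub>R\<^esub> N"
  obtains c g n where "c \<in> carrier R" "g \<in> Idl G" "n \<in> N" "x = c \<otimes> f \<oplus> g \<oplus> n"
  using assms unfolding genideal_insert[OF assms(1,2)] set_add_def' cgenideal_def by blast

context
  fixes K N G f k c g n
  assumes K: "ideal K R" and N: "ideal N R" and f: "f \<in> carrier R" and G: "G \<subseteq> carrier R"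
    and KW: "K \<subseteq> Idl (insert f G) <+>\<^bsub>R\<^esub> N"
    and k: "k \<in> K" "c \<in> Units R" "g \<in> Idl G" "n \<in> N" "k = c \<otimes> f \<oplus> g \<oplus> n"
begin

private lemma unit_coeff_carrier: "c \<in> carrier R" "inv c \<in> carrier R" "g \<in> carrier R" "n \<in> carrier R"
  using k ideal_subset_carrier[OF N] ideal_subset_carrier[OF genideal_ideal[OF G]] by auto

lemma subset_cgenideal_set_add_if_unit_coeff: "K \<subseteq> PIdl k <+>\<^bsub>R\<^esub> (K \<inter> (Idl G <+>\<^bsub>R\<^esub> N))"
proof
  fix x assume x: "x \<in> K"
  obtain c' g' n' where x': "c' \<in> carrier R" "g' \<in> Idl G" "n' \<in> N" "x = c' \<otimes> f \<oplus> g' \<oplus> n'"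
    using genideal_insert_set_add_cases[OF f G] x KW by blast
  have g'n': "g' \<in> carrier R" "n' \<in> carrier R"
    using x' ideal_subset_carrier[OF N] ideal_subset_carrier[OF genideal_ideal[OF G]] by auto
  define e where "e = c' \<otimes> inv c"
  have e: "e \<in> carrier R" unfolding e_def using x'(1) unit_coeff_carrier by simp
  have "c' \<otimes> f = e \<otimes> (c \<otimes> f)"
    unfolding e_def using x'(1) unit_coeff_carrier f Units_l_inv[OF k(2)] by (simp add: m_assoc[symmetric])
      (simp add: m_assoc)
  then have "x \<ominus> e \<otimes> k = (g' \<ominus> e \<otimes> g) \<oplus> (n' \<ominus> e \<otimes> n)"
    unfolding x'(4) k(5) using e unit_coeff_carrier f x'(1) g'n' by algebra
  moreover have "g' \<ominus> e \<otimes> g \<in> Idl G" "n' \<ominus> e \<otimes> n \<in> N"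
    using ideal_minus_closed[OF genideal_ideal[OF G] x'(2) ideal.I_l_closed[OF genideal_ideal[OF G] k(3) e]]
      ideal_minus_closed[OF N x'(3) ideal.I_l_closed[OF N k(4) e]] .
  ultimately have rest: "x \<ominus> e \<otimes> k \<in> K \<inter> (Idl G <+>\<^bsub>R\<^esub> N)"
    using ideal_minus_closed[OF K x ideal.I_l_closed[OF K k(1) e]] set_add_memI by blast
  have xk: "x \<in> carrier R" "k \<in> carrier R" using x k(1) ideal_subset_carrier[OF K] by auto
  have "e \<otimes> k \<in> PIdl k" unfolding cgenideal_def using e by blast
  moreover note rest
  moreover have "x = e \<otimes> k \<oplus> (x \<ominus> e \<otimes> k)" using e xk by algebra
  ultimately show "x \<in> PIdl k <+>\<^bsub>R\<^esub> (K \<inter> (Idl G <+>\<^bsub>R\<^esub> N))" by (rule set_add_memI)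
qed

lemma subset_genideal_insert_set_add_if_unit_coeff:
  assumes F: "F \<subseteq> carrier R" and "K \<inter> (Idl G <+>\<^bsub>R\<^esub> N) \<subseteq> Idl F <+>\<^bsub>R\<^esub> N"
  shows "K \<subseteq> Idl (insert k F) <+>\<^bsub>R\<^esub> N"
proof -
  have kc: "k \<in> carrier R" using k(1) ideal_subset_carrier[OF K] by blast
  have "K \<subseteq> PIdl k <+>\<^bsub>R\<^esub> (Idl F <+>\<^bsub>R\<^esub> N)"
    using subset_cgenideal_set_add_if_unit_coeff set_add_mono[OF order.refl assms(2)] by (rule order.trans)
  also have "\<dots> = Idl (insert k F) <+>\<^bsub>R\<^esub> N"
    unfolding genideal_insert[OF kc F]
    by (intro set_add_assoc[symmetric] ideal_subset_carrier cgenideal_ideal genideal_ideal kc F N)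
  finally show ?thesis .
qed

lemma genideal_insert_subset_if_unit_coeff:
  assumes "Idl G \<subseteq> K <+>\<^bsub>R\<^esub> N"
  shows "Idl (insert f G) \<subseteq> K <+>\<^bsub>R\<^esub> N"
proof -
  have iKN: "ideal (K <+>\<^bsub>R\<^esub> N) R" using add_ideals[OF K N] .
  have "k \<in> K <+>\<^bsub>R\<^esub> N" "n \<in> K <+>\<^bsub>R\<^esub> N"
    using k subset_set_add_left[OF N ideal_subset_carrier[OF K]]
      subset_set_add_right[OF K ideal_subset_carrier[OF N]] by auto
  moreover have "g \<in> K <+>\<^bsub>R\<^esub> N" using k(3) assms by blast
  moreover have "f = inv c \<otimes> (k \<ominus> g \<ominus> n)"
  proof -
    have "k \<ominus> g \<ominus> n = c \<otimes> f" unfolding k(5) using unit_coeff_carrier f by algebra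
    then show ?thesis using unit_coeff_carrier f Units_l_inv[OF k(2)] by (simp add: m_assoc[symmetric])
  qed
  ultimately have "f \<in> K <+>\<^bsub>R\<^esub> N"
    using ideal.I_l_closed[OF iKN] ideal_minus_closed[OF iKN] unit_coeff_carrier by metis
  then have "PIdl f \<subseteq> K <+>\<^bsub>R\<^esub> N" by (rule cgenideal_minimal[OF iKN])
  then show ?thesis
    unfolding genideal_insert[OF f G] using assms by (rule set_add_subset_ideal[OF iKN])
qed

end

lemma subset_set_add_if_no_unit_coeff:
  assumes M: "ideal (max_ideal R) R" and N: "ideal N R" and f: "f \<in> carrier R" and G: "G \<subseteq> carrier R"
    and MW: "max_ideal R \<cdot> (Idl (insert f G)) \<subseteq> N" and KW: "K \<subseteq> Idl (insert f G) <+>\<^bsub>R\<^esub> N"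
    and no_unit: "\<And>k c g n. k \<in> K \<Longrightarrow> g \<in> Idl G \<Longrightarrow> n \<in> N \<Longrightarrow> k = c \<otimes> f \<oplus> g \<oplus> n \<Longrightarrow> c \<notin> Units R"
  shows "K \<subseteq> Idl G <+>\<^bsub>R\<^esub> N"
proof
  fix x assume x: "x \<in> K"
  obtain c g n where d: "c \<in> carrier R" "g \<in> Idl G" "n \<in> N" "x = c \<otimes> f \<oplus> g \<oplus> n"
    using genideal_insert_set_add_cases[OF f G] x KW by blast
  have "c \<in> max_ideal R" using no_unit[OF x d(2-4)] d(1) unfolding max_ideal_def by simp
  moreover have "f \<in> Idl (insert f G)" using genideal_self[of "insert f G"] f G by simp
  ultimately have cf: "c \<otimes> f \<in> N" using subsetD[OF MW ideal_prod.prod] by simp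
  have "g \<in> carrier R" "n \<in> carrier R"
    using d(2,3) ideal_subset_carrier[OF N] ideal_subset_carrier[OF genideal_ideal[OF G]] by auto
  then have "x = g \<oplus> (c \<otimes> f \<oplus> n)" unfolding d(4) using d(1) f by algebra
  then show "x \<in> Idl G <+>\<^bsub>R\<^esub> N"
    by (rule set_add_memI[OF d(2) additive_subgroup.a_closed[OF ideal.axioms(1)[OF N] cf d(3)]])
qed

text \<open>Over the residue field this says: a subspace of the span of the images of \<open>F\<close> is
  spanned by at most \<open>card F\<close> vectors, and by fewer if it is a proper subspace.\<close>

lemma exists_generators_mod:
  assumes M: "ideal (max_ideal R) R" and N: "ideal N R" and F: "finite F" "F \<subseteq> carrier R"
  shows "max_ideal R \<cdot> (Idl F) \<subseteq> N \<Longrightarrow> ideal K R \<Longrightarrow> K \<subseteq> Idl F <+>\<^bsub>R\<^esub> N \<Longrightarrow>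
    \<exists>F'. finite F' \<and> F' \<subseteq> K \<and> K \<subseteq> Idl F' <+>\<^bsub>R\<^esub> N \<and> card F' \<le> card F \<and>
         (\<not> Idl F \<subseteq> K <+>\<^bsub>R\<^esub> N \<longrightarrow> card F' < card F)"
  using F
proof (induction F arbitrary: K rule: finite_induct)
  case empty
  have "Idl {} \<subseteq> K <+>\<^bsub>R\<^esub> N" by (rule genideal_minimal[OF add_ideals[OF empty.prems(2) N]]) simp
  then show ?case using empty.prems(3) by (intro exI[of _ "{}"]) simp
next
  case (insert f G K)
  have f: "f \<in> carrier R" and G: "G \<subseteq> carrier R" and K: "ideal K R" using insert.prems by auto
  have MG: "max_ideal R \<cdot> (Idl G) \<subseteq> N"
    using insert.prems(1,4) ideal_prod_mono[OF order.refl subset_Idl_subset[of "insert f G" G]] by auto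
  show ?case
  proof (cases "\<exists>k c g n. k \<in> K \<and> c \<in> Units R \<and> g \<in> Idl G \<and> n \<in> N \<and> k = c \<otimes> f \<oplus> g \<oplus> n")
    case True
    then obtain k c g n where kc: "k \<in> K" "c \<in> Units R" "g \<in> Idl G" "n \<in> N" "k = c \<otimes> f \<oplus> g \<oplus> n"
      by blast
    define K' where "K' = K \<inter> (Idl G <+>\<^bsub>R\<^esub> N)"
    have iK': "ideal K' R"
      unfolding K'_def using i_intersect[OF K add_ideals[OF genideal_ideal[OF G] N]] .
    obtain F'' where F'': "finite F''" "F'' \<subseteq> K'" "K' \<subseteq> Idl F'' <+>\<^bsub>R\<^esub> N" "card F'' \<le> card G"
        "\<not> Idl G \<subseteq> K' <+>\<^bsub>R\<^esub> N \<longrightarrow> card F'' < card G"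
      using insert.IH[OF MG iK'] G unfolding K'_def by blast
    have "F'' \<subseteq> carrier R" using F''(2) ideal_subset_carrier[OF K] unfolding K'_def by auto
    then have cover: "K \<subseteq> Idl (insert k F'') <+>\<^bsub>R\<^esub> N"
      using F''(3) unfolding K'_def
      by (rule subset_genideal_insert_set_add_if_unit_coeff[OF K N f G insert.prems(3) kc])
    have "Idl (insert f G) \<subseteq> K <+>\<^bsub>R\<^esub> N" if "Idl G \<subseteq> K' <+>\<^bsub>R\<^esub> N"
      using genideal_insert_subset_if_unit_coeff[OF K N f G insert.prems(3) kc
          order.trans[OF that[unfolded K'_def] set_add_mono[OF Int_lower1 order.refl]]] .
    then show ?thesis
      using F'' kc(1) cover card_insert_if[of F'' k] insert.hyps
      unfolding K'_def by (intro exI[of _ "insert k F''"]) auto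
  next
    case False
    have "K \<subseteq> Idl G <+>\<^bsub>R\<^esub> N"
      using False by (intro subset_set_add_if_no_unit_coeff[OF M N f G insert.prems(1,3)]) blast
    then obtain F' where "finite F'" "F' \<subseteq> K" "K \<subseteq> Idl F' <+>\<^bsub>R\<^esub> N" "card F' \<le> card G"
      using insert.IH[OF MG K] G by blast
    then show ?thesis using insert.hyps by (intro exI[of _ F']) auto
  qed
qed

theorem exists_minimal_reduction:
  assumes M: "ideal (max_ideal R) R" and B: "finite B" "B \<subseteq> carrier R" "max_ideal R = Idl B"
    and G: "finite G" "G \<subseteq> carrier R" and red: "is_reduction_of_max R (Idl G)"
  shows "\<exists>J. is_minimal_reduction_of_max R J \<and> J \<subseteq> Idl G"
proof -
  let ?M = "max_ideal R"
  define small where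
    "small n \<longleftrightarrow> (\<exists>F. finite F \<and> F \<subseteq> Idl G \<and> card F = n \<and> is_reduction_of_max R (Idl F))" for n
  have "small (card G)" unfolding small_def using G genideal_self[OF G(2)] red by blast
  then obtain F where F: "finite F" "F \<subseteq> Idl G" "card F = (LEAST n. small n)" "is_reduction_of_max R (Idl F)"
    using LeastI[of small] unfolding small_def by blast
  have Fc: "F \<subseteq> carrier R" using F(2) ideal_subset_carrier[OF genideal_ideal[OF G(2)]] by blast
  have iF: "ideal (Idl F) R" and FM: "Idl F \<subseteq> ?M"
    using genideal_ideal[OF Fc] F(4) unfolding is_reduction_of_max_def by auto
  have FG: "Idl F \<subseteq> Idl G" using genideal_minimal[OF genideal_ideal[OF G(2)] F(2)] .
  have "J = Idl F" if J: "is_reduction_of_max R J" "J \<subseteq> Idl F" for J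
  proof -
    have iJ: "ideal J R" and JM: "J \<subseteq> ?M" using J(1) unfolding is_reduction_of_max_def by auto
    define N where "N = ?M \<cdot> (Idl F)"
    have iN: "ideal N R" unfolding N_def using ideal_prod_is_ideal[OF M iF] .
    have "J \<subseteq> Idl F <+>\<^bsub>R\<^esub> N" using J(2) subset_set_add_left[OF iN ideal_subset_carrier[OF iF]] by blast
    then obtain F' where F': "finite F'" "F' \<subseteq> J" "J \<subseteq> Idl F' <+>\<^bsub>R\<^esub> N"
        "\<not> Idl F \<subseteq> J <+>\<^bsub>R\<^esub> N \<longrightarrow> card F' < card F"
      using exists_generators_mod[OF M iN F(1) Fc _ iJ] unfolding N_def by blast
    show ?thesis
    proof (cases "Idl F \<subseteq> J <+>\<^bsub>R\<^esub> N")
      case True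
      then show ?thesis using nakayama[OF M F(1) Fc iJ] J(2) unfolding N_def by blast
    next
      case False
      have "is_reduction_of_max R (Idl F')"
        using is_reduction_of_max_if_subset[OF M B J(1) F'(1) _ iF FM] F'(2,3) JM unfolding N_def by blast
      then have "small (card F')" unfolding small_def using F'(1,2) J(2) FG by blast
      then show ?thesis using not_less_Least[of "card F'" small] F'(4) False F(3) by simp
    qed
  qed
  then have "is_minimal_reduction_of_max R (Idl F)"
    unfolding is_minimal_reduction_of_max_def using F(4) by blast
  then show ?thesis using FG by blast
qed

end

section \<open>The local ring at a point is local, with finitely generated maximal ideal\<close>

locale local_ring_at_point = homogeneous_localization +
  assumes on_subscheme: "on_subscheme I p"
begin

definition germ_value :: "(mpoly \<times> mpoly) set \<Rightarrow> complex" where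
  "germ_value A = mpoly_eval (fst (frac_rep A)) p / mpoly_eval (snd (frac_rep A)) p"

definition const_germ :: "complex \<Rightarrow> (mpoly \<times> mpoly) set" where
  "const_germ c = cls (const_poly c, 1)"

lemma germ_value_cls:
  assumes x: "x \<in> Fr"
  shows "germ_value (cls x) = mpoly_eval (fst x) p / mpoly_eval (snd x) p"
proof -
  define y where "y = frac_rep (cls x)"
  have y: "y \<in> Fr" and "eqv x y" unfolding y_def using rep_in_Fr[OF x] eqv_rep[OF x] by auto
  then obtain s where s: "mpoly_eval s p \<noteq> 0" "s * (fst x * snd y - fst y * snd x) \<in> I"
    unfolding frac_eqv_def denominators_def by blast
  have "mpoly_eval (s * (fst x * snd y - fst y * snd x)) p = 0"
    using on_subscheme s(2) unfolding on_subscheme_def by blast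
  then have "mpoly_eval (fst x) p * mpoly_eval (snd y) p = mpoly_eval (fst y) p * mpoly_eval (snd x) p"
    using s(1) by (simp add: mpoly_eval_mult mpoly_eval_diff)
  then show ?thesis
    unfolding germ_value_def y_def[symmetric] using frac_domD(3)[OF x] frac_domD(3)[OF y]
    by (simp add: field_simps)
qed

lemma germ_value_mult:
  "A \<in> carrier Rp \<Longrightarrow> B \<in> carrier Rp \<Longrightarrow> germ_value (A \<otimes>\<^bsub>Rp\<^esub> B) = germ_value A * germ_value B"
  by (elim carrier_local_ringE)
     (simp add: cls_mult frac_mult_dom germ_value_cls, simp add: frac_mult_def mpoly_eval_mult)

lemma germ_value_add:
  "A \<in> carrier Rp \<Longrightarrow> B \<in> carrier Rp \<Longrightarrow> germ_value (A \<oplus>\<^bsub>Rp\<^esub> B) = germ_value A + germ_value B"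
proof (elim carrier_local_ringE)
  fix x y assume x: "x \<in> Fr" and y: "y \<in> Fr" and "A = cls x" "B = cls y"
  then show ?thesis
    using frac_domD(3)[OF x] frac_domD(3)[OF y]
    by (simp add: cls_add frac_add_dom germ_value_cls,
        simp add: frac_add_def mpoly_eval_mult mpoly_eval_add field_simps)
qed

lemma germ_value_one: "germ_value \<one>\<^bsub>Rp\<^esub> = 1"
  unfolding one_local_ring using germ_value_cls[OF frac_one_dom] by simp

lemma germ_value_zero: "germ_value \<zero>\<^bsub>Rp\<^esub> = 0"
  unfolding zero_local_ring using germ_value_cls[OF frac_zero_dom] by simp

lemma germ_value_a_inv: "A \<in> carrier Rp \<Longrightarrow> germ_value (\<ominus>\<^bsub>Rp\<^esub> A) = - germ_value A"
proof -
  assume A: "A \<in> carrier Rp"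
  interpret cring Rp by (rule cring_local_ring)
  have "germ_value A + germ_value (\<ominus>\<^bsub>Rp\<^esub> A) = 0"
    using germ_value_add[OF A a_inv_closed[OF A]] r_neg[OF A] germ_value_zero by simp
  then show ?thesis by (simp add: add_eq_0_iff)
qed

lemma const_germ_in_carrier: "const_germ c \<in> carrier Rp"
  unfolding const_germ_def using cls_in_carrier[OF frac_const_dom] .

lemma const_germ_add: "const_germ (a + b) = const_germ a \<oplus>\<^bsub>Rp\<^esub> const_germ b"
  unfolding const_germ_def cls_add[OF frac_const_dom frac_const_dom]
  by (rule cls_eqI[OF frac_const_dom frac_add_dom[OF frac_const_dom frac_const_dom]])
     (simp add: frac_add_def const_poly_add)

lemma const_germ_mult: "const_germ (a * b) = const_germ a \<otimes>\<^bsub>Rp\<^esub> const_germ b"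
  unfolding const_germ_def cls_mult[OF frac_const_dom frac_const_dom]
  by (rule cls_eqI[OF frac_const_dom frac_mult_dom[OF frac_const_dom frac_const_dom]])
     (simp add: frac_mult_def const_poly_mult)

lemma const_germ_0: "const_germ 0 = \<zero>\<^bsub>Rp\<^esub>"
  unfolding const_germ_def zero_local_ring by simp

lemma const_germ_1: "const_germ 1 = \<one>\<^bsub>Rp\<^esub>"
  unfolding const_germ_def one_local_ring by simp

lemma Units_local_ring_iff:
  assumes A: "A \<in> carrier Rp"
  shows "A \<in> Units Rp \<longleftrightarrow> germ_value A \<noteq> 0"
proof
  assume "A \<in> Units Rp"
  then obtain B where B: "B \<in> carrier Rp" "B \<otimes>\<^bsub>Rp\<^esub> A = \<one>\<^bsub>Rp\<^esub>" unfolding Units_def by blast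
  then have "germ_value B * germ_value A = 1" using germ_value_mult[OF B(1) A] germ_value_one by simp
  then show "germ_value A \<noteq> 0" by auto
next
  assume v: "germ_value A \<noteq> 0"
  from A obtain x where x: "x \<in> Fr" and Ax: "A = cls x" by (elim carrier_local_ringE)
  obtain d where d: "homog d (fst x)" "homog d (snd x)" using frac_domD(4)[OF x] by blast
  have x': "(snd x, fst x) \<in> Fr"
    using frac_domD[OF x] v germ_value_cls[OF x] d Ax by (intro frac_domI) auto
  have "cls x \<otimes>\<^bsub>Rp\<^esub> cls (snd x, fst x) = \<one>\<^bsub>Rp\<^esub>" "cls (snd x, fst x) \<otimes>\<^bsub>Rp\<^esub> cls x = \<one>\<^bsub>Rp\<^esub>"
    unfolding one_local_ring cls_mult[OF x x'] cls_mult[OF x' x]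
    by (rule cls_eqI[OF frac_mult_dom[OF x x'] frac_one_dom], simp add: frac_mult_def mult.commute,
        rule cls_eqI[OF frac_mult_dom[OF x' x] frac_one_dom], simp add: frac_mult_def mult.commute)
  then show "A \<in> Units Rp" unfolding Units_def Ax using cls_in_carrier[OF x] cls_in_carrier[OF x'] by blast
qed

lemma max_ideal_local_ring: "max_ideal Rp = {A \<in> carrier Rp. germ_value A = 0}"
  unfolding max_ideal_def using Units_local_ring_iff by blast

lemma one_neq_zero_local_ring: "\<one>\<^bsub>Rp\<^esub> \<noteq> \<zero>\<^bsub>Rp\<^esub>"
  using germ_value_one germ_value_zero by force

lemma ideal_max_ideal_local_ring: "ideal (max_ideal Rp) Rp"
proof -
  interpret cring Rp by (rule cring_local_ring)
  show ?thesis unfolding max_ideal_local_ring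
  proof (rule idealI[OF ring_axioms])
    show "subgroup {A \<in> carrier Rp. germ_value A = 0} (add_monoid Rp)"
      by (rule add.subgroupI) (auto simp: germ_value_a_inv germ_value_add germ_value_zero)
  qed (auto simp: germ_value_mult)
qed

end

locale local_ring_at_proj_point = local_ring_at_point +
  assumes proj_point: "proj_point r p"
begin

text \<open>\<open>x0\<close> is the first coordinate not vanishing at \<open>p\<close>, scaled so that \<open>x0(p) = 1\<close>;
  the germs \<open>x_j / x0 - p_j\<close> generate the maximal ideal.\<close>

definition "i0 = (LEAST i. p i \<noteq> 0)"
definition "x0 = const_poly (inverse (p i0)) * Var i0"
definition "max_ideal_gens = (\<lambda>j. cls (Var j - const_poly (p j) * x0, x0)) ` {..r}"
definition "monomial_germ a = cls (Poly_Mapping.single a 1, x0 ^ mon_deg a)"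

lemma i0: "p i0 \<noteq> 0" "i0 \<le> r"
proof -
  obtain i where i: "i \<le> r" "p i \<noteq> 0" using proj_point unfolding proj_point_def by blast
  show "p i0 \<noteq> 0" unfolding i0_def using i(2) by (rule LeastI)
  show "i0 \<le> r" using Least_le[of "\<lambda>i. p i \<noteq> 0", OF i(2)] i(1) unfolding i0_def by simp
qed

lemma x0: "in_S r x0" "homog 1 x0" "mpoly_eval x0 p = 1"
  unfolding x0_def using i0 homog_const_poly_mult[OF homog_Var]
  by (auto simp: in_S_mult in_S_Var mpoly_eval_mult mpoly_eval_Var)

lemma x0_power_dom: "in_S r f \<Longrightarrow> homog d f \<Longrightarrow> (f, x0 ^ d) \<in> Fr"
  using x0 homog_power[OF x0(2), of d] by (intro frac_domI[where d=d]) (auto simp: in_S_power mpoly_eval_power)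

lemma Var_dom: "j \<le> r \<Longrightarrow> (Var j, x0) \<in> Fr"
  using x0_power_dom[OF in_S_Var homog_Var, of j] by simp

lemma max_ideal_gen_dom: "j \<le> r \<Longrightarrow> (Var j - const_poly (p j) * x0, x0) \<in> Fr"
proof -
  assume j: "j \<le> r"
  have "homog 1 (Var j - const_poly (p j) * x0)"
    using homog_Var x0(2) by (intro homog_diff homog_const_poly_mult)
  then show ?thesis
    using x0_power_dom[of "Var j - const_poly (p j) * x0" 1] x0 j by (simp add: in_S_Var in_S_diff in_S_mult)
qed

lemma monomial_dom: "Poly_Mapping.keys a \<subseteq> {..r} \<Longrightarrow> (Poly_Mapping.single a 1, x0 ^ mon_deg a) \<in> Fr"
  by (intro x0_power_dom in_S_single homog_single) auto

lemma max_ideal_gens_subset: "max_ideal_gens \<subseteq> carrier Rp"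
  unfolding max_ideal_gens_def using max_ideal_gen_dom cls_in_carrier by blast

lemma finite_max_ideal_gens: "finite max_ideal_gens"
  unfolding max_ideal_gens_def by simp

lemma ideal_genideal_max_ideal_gens: "ideal (Idl\<^bsub>Rp\<^esub> max_ideal_gens) Rp"
  using cring.axioms(1)[OF cring_local_ring] max_ideal_gens_subset by (rule ring.genideal_ideal)

lemma Var_germ_minus_value:
  assumes j: "j \<le> r"
  shows "cls (Var j, x0) \<ominus>\<^bsub>Rp\<^esub> const_germ (p j) \<in> Idl\<^bsub>Rp\<^esub> max_ideal_gens"
proof -
  interpret cring Rp by (rule cring_local_ring)
  let ?g = "cls (Var j - const_poly (p j) * x0, x0)"
  have eq: "cls (Var j, x0) = const_germ (p j) \<oplus>\<^bsub>Rp\<^esub> ?g"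
    unfolding const_germ_def cls_add[OF frac_const_dom max_ideal_gen_dom[OF j]]
    by (rule cls_eqI[OF Var_dom[OF j] frac_add_dom[OF frac_const_dom max_ideal_gen_dom[OF j]]])
       (simp add: frac_add_def algebra_simps)
  have "const_germ (p j) \<in> carrier Rp" "?g \<in> carrier Rp"
    using const_germ_in_carrier cls_in_carrier[OF max_ideal_gen_dom[OF j]] .
  then have "cls (Var j, x0) \<ominus>\<^bsub>Rp\<^esub> const_germ (p j) = ?g" unfolding eq by algebra
  moreover have "?g \<in> max_ideal_gens" unfolding max_ideal_gens_def using j by blast
  ultimately show ?thesis using genideal_self[OF max_ideal_gens_subset] by auto
qed

lemma monomial_germ_add_Var:
  assumes a: "Poly_Mapping.keys a \<subseteq> {..r}" and j: "j \<le> r"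
  shows "monomial_germ (a + Poly_Mapping.single j 1) = monomial_germ a \<otimes>\<^bsub>Rp\<^esub> cls (Var j, x0)"
proof -
  have a': "Poly_Mapping.keys (a + Poly_Mapping.single j 1) \<subseteq> {..r}" using a j by (auto simp: keys_add_nat)
  show ?thesis
    unfolding monomial_germ_def cls_mult[OF monomial_dom[OF a] Var_dom[OF j]]
    by (rule cls_eqI[OF monomial_dom[OF a'] frac_mult_dom[OF monomial_dom[OF a] Var_dom[OF j]]])
       (simp only: frac_mult_def fst_conv snd_conv mon_deg_add mon_deg_single single_mult_Var[symmetric],
        simp add: ac_simps)
qed

lemma monomial_germ_minus_value:
  "Poly_Mapping.keys a \<subseteq> {..r} \<Longrightarrow>
    monomial_germ a \<ominus>\<^bsub>Rp\<^esub> const_germ (mon_eval a p) \<in> Idl\<^bsub>Rp\<^esub> max_ideal_gens"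
proof (induction "mon_deg a" arbitrary: a)
  case 0
  interpret cring Rp by (rule cring_local_ring)
  have "monomial_germ a = \<one>\<^bsub>Rp\<^esub>" "const_germ (mon_eval a p) = \<one>\<^bsub>Rp\<^esub>"
    using 0(1)[symmetric] by (simp_all add: mon_deg_eq_0_iff monomial_germ_def one_local_ring const_germ_1)
  then show ?case
    using additive_subgroup.zero_closed[OF ideal.axioms(1)[OF ideal_genideal_max_ideal_gens]]
    by (simp add: a_minus_def r_neg)
next
  case (Suc n a)
  interpret cring Rp by (rule cring_local_ring)
  obtain j where j: "j \<in> Poly_Mapping.keys a"
    using Suc(2) by (metis mon_deg_eq_0_iff keys_eq_empty ex_in_conv nat.distinct(1))
  define b where "b = a - Poly_Mapping.single j 1"
  have a: "a = b + Poly_Mapping.single j 1" unfolding b_def using monomial_remove_var(1)[OF j] .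
  have b: "Poly_Mapping.keys b \<subseteq> {..r}" and jr: "j \<le> r"
    unfolding b_def using monomial_remove_var(2)[OF j] Suc(3) j by auto
  have IH: "monomial_germ b \<ominus>\<^bsub>Rp\<^esub> const_germ (mon_eval b p) \<in> Idl\<^bsub>Rp\<^esub> max_ideal_gens"
    using Suc(1)[OF _ b] Suc(2) a by (simp add: mon_deg_add mon_deg_single)
  have carr: "monomial_germ b \<in> carrier Rp" "cls (Var j, x0) \<in> carrier Rp"
    "const_germ (mon_eval b p) \<in> carrier Rp" "const_germ (p j) \<in> carrier Rp"
    using cls_in_carrier[OF monomial_dom[OF b]] cls_in_carrier[OF Var_dom[OF jr]] const_germ_in_carrier
    unfolding monomial_germ_def by auto
  have "monomial_germ a \<ominus>\<^bsub>Rp\<^esub> const_germ (mon_eval a p)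
      = (monomial_germ b \<ominus>\<^bsub>Rp\<^esub> const_germ (mon_eval b p)) \<otimes>\<^bsub>Rp\<^esub> cls (Var j, x0)
        \<oplus>\<^bsub>Rp\<^esub> const_germ (mon_eval b p) \<otimes>\<^bsub>Rp\<^esub> (cls (Var j, x0) \<ominus>\<^bsub>Rp\<^esub> const_germ (p j))"
    unfolding a monomial_germ_add_Var[OF b jr] mon_eval_add mon_eval_single power_one_right const_germ_mult
    using carr by algebra
  also have "\<dots> \<in> Idl\<^bsub>Rp\<^esub> max_ideal_gens"
    using ideal_genideal_max_ideal_gens IH Var_germ_minus_value[OF jr] carr
    by (intro additive_subgroup.a_closed[OF ideal.axioms(1)] ideal.I_r_closed ideal.I_l_closed)
  finally show ?case .
qed

lemma germ_minus_value:
  "in_S r f \<Longrightarrow> homog d f \<Longrightarrow> cls (f, x0 ^ d) \<ominus>\<^bsub>Rp\<^esub> const_germ (mpoly_eval f p) \<in> Idl\<^bsub>Rp\<^esub> max_ideal_gens"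
proof (induction f rule: mpoly_induct)
  case zero
  interpret cring Rp by (rule cring_local_ring)
  have "cls (0, x0 ^ d) = \<zero>\<^bsub>Rp\<^esub>"
    unfolding zero_local_ring by (rule cls_eqI[OF x0_power_dom frac_zero_dom]) auto
  then show ?case
    using additive_subgroup.zero_closed[OF ideal.axioms(1)[OF ideal_genideal_max_ideal_gens]]
    by (simp add: const_germ_0 a_minus_def)
next
  case (add f a c)
  interpret cring Rp by (rule cring_local_ring)
  have f: "in_S r f" "homog d f" and a: "Poly_Mapping.keys a \<subseteq> {..r}" "mon_deg a = d"
    using in_S_add_single_D[OF add(1,2,4)] homog_add_single_D[OF add(1,2,5)] by auto
  have dom: "(f, x0 ^ d) \<in> Fr" "(f + Poly_Mapping.single a c, x0 ^ d) \<in> Fr"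
    using x0_power_dom add.prems f by auto
  have "cls (f + Poly_Mapping.single a c, x0 ^ d) = cls (f, x0 ^ d) \<oplus>\<^bsub>Rp\<^esub> const_germ c \<otimes>\<^bsub>Rp\<^esub> monomial_germ a"
    unfolding const_germ_def monomial_germ_def cls_mult[OF frac_const_dom monomial_dom[OF a(1)]]
      cls_add[OF dom(1) frac_mult_dom[OF frac_const_dom monomial_dom[OF a(1)]]]
    by (rule cls_eqI[OF dom(2) frac_add_dom[OF dom(1) frac_mult_dom[OF frac_const_dom monomial_dom[OF a(1)]]]])
       (simp add: frac_add_def frac_mult_def a(2) single_eq_const_poly_mult[of a c] algebra_simps)
  moreover have "const_germ (mpoly_eval (f + Poly_Mapping.single a c) p)
      = const_germ (mpoly_eval f p) \<oplus>\<^bsub>Rp\<^esub> const_germ c \<otimes>\<^bsub>Rp\<^esub> const_germ (mon_eval a p)"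
    by (simp add: mpoly_eval_add mpoly_eval_single const_germ_add const_germ_mult)
  moreover have "cls (f, x0 ^ d) \<in> carrier Rp" "monomial_germ a \<in> carrier Rp"
    using cls_in_carrier[OF dom(1)] cls_in_carrier[OF monomial_dom[OF a(1)]] unfolding monomial_germ_def .
  ultimately have "cls (f + Poly_Mapping.single a c, x0 ^ d) \<ominus>\<^bsub>Rp\<^esub> const_germ (mpoly_eval (f + Poly_Mapping.single a c) p)
      = (cls (f, x0 ^ d) \<ominus>\<^bsub>Rp\<^esub> const_germ (mpoly_eval f p))
        \<oplus>\<^bsub>Rp\<^esub> const_germ c \<otimes>\<^bsub>Rp\<^esub> (monomial_germ a \<ominus>\<^bsub>Rp\<^esub> const_germ (mon_eval a p))"
    using const_germ_in_carrier by algebra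
  also have "\<dots> \<in> Idl\<^bsub>Rp\<^esub> max_ideal_gens"
    using ideal_genideal_max_ideal_gens add.IH[OF f] monomial_germ_minus_value[OF a(1)] const_germ_in_carrier
    by (intro additive_subgroup.a_closed[OF ideal.axioms(1)] ideal.I_l_closed)
  finally show ?case .
qed

theorem max_ideal_eq_genideal_max_ideal_gens: "max_ideal Rp = Idl\<^bsub>Rp\<^esub> max_ideal_gens"
proof
  interpret cring Rp by (rule cring_local_ring)
  have "max_ideal_gens \<subseteq> max_ideal Rp"
  proof
    fix z assume "z \<in> max_ideal_gens"
    then obtain j where j: "j \<le> r" "z = cls (Var j - const_poly (p j) * x0, x0)"
      unfolding max_ideal_gens_def by blast
    then show "z \<in> max_ideal Rp"
      unfolding max_ideal_local_ring using germ_value_cls[OF max_ideal_gen_dom[OF j(1)]]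
        cls_in_carrier[OF max_ideal_gen_dom[OF j(1)]] x0
      by (simp add: mpoly_eval_diff mpoly_eval_mult mpoly_eval_Var)
  qed
  then show "Idl\<^bsub>Rp\<^esub> max_ideal_gens \<subseteq> max_ideal Rp"
    by (rule genideal_minimal[OF ideal_max_ideal_local_ring])
next
  interpret cring Rp by (rule cring_local_ring)
  show "max_ideal Rp \<subseteq> Idl\<^bsub>Rp\<^esub> max_ideal_gens"
  proof
    fix A assume "A \<in> max_ideal Rp"
    then obtain x where x: "x \<in> Fr" "A = cls x" and v: "germ_value A = 0"
      unfolding max_ideal_local_ring by (auto elim: carrier_local_ringE)
    obtain d where d: "homog d (fst x)" "homog d (snd x)" using frac_domD(4)[OF x(1)] by blast
    have num: "(fst x, x0 ^ d) \<in> Fr" and den: "(x0 ^ d, snd x) \<in> Fr"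
      using x0_power_dom frac_domD[OF x(1)] d x0_power_dom[OF x0(1), of 1] homog_power[OF x0(2), of d]
      by (auto intro!: frac_domI[where d=d] simp: in_S_power mpoly_eval_power x0)
    have "mpoly_eval (fst x) p = 0" using v germ_value_cls[OF x(1)] x(2) frac_domD(3)[OF x(1)] by simp
    then have "cls (fst x, x0 ^ d) \<in> Idl\<^bsub>Rp\<^esub> max_ideal_gens"
      using germ_minus_value[OF frac_domD(1)[OF x(1)] d(1)] cls_in_carrier[OF num]
      by (simp add: const_germ_0 a_minus_def)
    moreover have "A = cls (fst x, x0 ^ d) \<otimes>\<^bsub>Rp\<^esub> cls (x0 ^ d, snd x)"
      unfolding x(2) cls_mult[OF num den]
      by (rule cls_eqI[OF x(1) frac_mult_dom[OF num den]]) (simp add: frac_mult_def ac_simps)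
    ultimately show "A \<in> Idl\<^bsub>Rp\<^esub> max_ideal_gens"
      using ideal.I_r_closed[OF ideal_genideal_max_ideal_gens _ cls_in_carrier[OF den]] by simp
  qed
qed

end

section \<open>Passing from \<open>X\<close> to \<open>X \<inter> L\<close>\<close>

lemma S_ideal_Inter:
  assumes "\<And>J. J \<in> \<J> \<Longrightarrow> S_ideal r J" "\<J> \<noteq> {}"
  shows "S_ideal r (\<Inter>\<J>)"
  using assms unfolding S_ideal_def by blast

lemma S_ideal_vanishing: "S_ideal r {f. in_S r f \<and> mpoly_eval f p = 0}"
  unfolding S_ideal_def by (auto simp: in_S_add in_S_mult mpoly_eval_add mpoly_eval_mult)

lemma S_ideal_S_gen_ideal:
  assumes "\<And>g. g \<in> G \<Longrightarrow> in_S r g"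
  shows "S_ideal r (S_gen_ideal r G)"
proof -
  have "S_ideal r {f. in_S r f}" unfolding S_ideal_def by (auto simp: in_S_add in_S_mult)
  then have "{f. in_S r f} \<in> {I. S_ideal r I \<and> G \<subseteq> I}" using assms by blast
  then show ?thesis unfolding S_gen_ideal_def by (intro S_ideal_Inter) auto
qed

lemma subset_S_gen_ideal: "G \<subseteq> S_gen_ideal r G"
  unfolding S_gen_ideal_def by blast

lemma S_gen_ideal_subset: "S_ideal r J \<Longrightarrow> G \<subseteq> J \<Longrightarrow> S_gen_ideal r G \<subseteq> J"
  unfolding S_gen_ideal_def by blast

lemma intersection_ideal_properties:
  assumes P: "S_ideal r P" "on_subscheme P p" and L: "reduction_linear_subspace r P p ls"
  shows "S_ideal r (intersection_ideal r P ls)" "on_subscheme (intersection_ideal r P ls) p"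
    and "P \<union> set ls \<subseteq> intersection_ideal r P ls"
proof -
  have ls: "in_S r l \<and> mpoly_eval l p = 0" if "l \<in> set ls" for l
    using L that unfolding reduction_linear_subspace_def linear_form_def by blast
  have gens: "in_S r g" if "g \<in> P \<union> set ls" for g
    using that ls P(1) unfolding S_ideal_def by blast
  show "S_ideal r (intersection_ideal r P ls)"
    unfolding intersection_ideal_def by (rule S_ideal_S_gen_ideal[OF gens])
  show "P \<union> set ls \<subseteq> intersection_ideal r P ls"
    unfolding intersection_ideal_def by (rule subset_S_gen_ideal)
  have "P \<union> set ls \<subseteq> {f. in_S r f \<and> mpoly_eval f p = 0}"
    using gens ls P(2) unfolding on_subscheme_def by blast
  then show "on_subscheme (intersection_ideal r P ls) p"
    using S_gen_ideal_subset[OF S_ideal_vanishing] unfolding intersection_ideal_def on_subscheme_def by blast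
qed

context homogeneous_localization
begin

lemma cls_eq_zero_if_numerator_in: "x \<in> Fr \<Longrightarrow> fst x \<in> I \<Longrightarrow> cls x = \<zero>\<^bsub>Rp\<^esub>"
  unfolding zero_local_ring cls_eq_iff[OF _ frac_zero_dom] frac_eqv_def
  by (intro bexI[OF _ denominators_1]) simp

end

context local_ring_at_proj_point
begin

lemma germ_of_linear_form_dom:
  assumes "linear_form r l"
  shows "germ_of_linear_form r I p l = cls (l, Var i0)" "(l, Var i0) \<in> Fr"
  using assms i0 homog_Var[of i0] unfolding germ_of_linear_form_def linear_form_def
  by (auto simp: i0_def intro!: frac_domI[where d=1] simp: in_S_Var mpoly_eval_Var)

lemma germs_of_reduction_linear_subspace:
  assumes "reduction_linear_subspace r I p ls"
  shows "germ_of_linear_form r I p ` set ls \<subseteq> carrier Rp"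
    and "is_reduction_of_max Rp (Idl\<^bsub>Rp\<^esub> (germ_of_linear_form r I p ` set ls))"
  using assms germ_of_linear_form_dom cls_in_carrier unfolding reduction_linear_subspace_def by auto

end

lemma (in ring_hom_ring) ideal_pow_image:
  assumes M: "ideal M R" and surj: "carrier S \<subseteq> h ` carrier R" and M': "M' \<subseteq> h ` M"
  shows "ideal_pow S M' k \<subseteq> h ` ideal_pow R M k"
proof (induction k)
  case 0
  then show ?case using surj by simp
next
  case (Suc k)
  have MSk: "ideal (ideal_pow R M (Suc k)) R" using R.ideal_pow_ideal[OF M] .
  have Mk: "ideal_pow R M k \<subseteq> carrier R"
    using additive_subgroup.a_subset[OF ideal.axioms(1)[OF R.ideal_pow_ideal[OF M]]] .
  show ?case
  proof
    fix y assume "y \<in> ideal_pow S M' (Suc k)"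
    then have "y \<in> ideal_prod S M' (ideal_pow S M' k)" by simp
    then show "y \<in> h ` ideal_pow R M (Suc k)"
    proof (induction y rule: ideal_prod.induct)
      case (prod i j)
      obtain a b where ab: "a \<in> M" "i = h a" "b \<in> ideal_pow R M k" "j = h b"
        using subsetD[OF M' prod(1)] subsetD[OF Suc.IH prod(2)] by (auto simp: image_iff)
      then have "i \<otimes>\<^bsub>S\<^esub> j = h (a \<otimes> b)" using ideal.Icarr[OF M] Mk by auto
      moreover have "a \<otimes> b \<in> ideal_pow R M (Suc k)" using ab by (simp add: ideal_prod.prod)
      ultimately show ?case by (rule image_eqI)
    next
      case (sum s1 s2)
      obtain t1 t2 where t: "t1 \<in> ideal_pow R M (Suc k)" "s1 = h t1" "t2 \<in> ideal_pow R M (Suc k)" "s2 = h t2"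
        using sum.IH by (auto simp: image_iff)
      then have "s1 \<oplus>\<^bsub>S\<^esub> s2 = h (t1 \<oplus> t2)" using ideal.Icarr[OF MSk] by auto
      moreover have "t1 \<oplus> t2 \<in> ideal_pow R M (Suc k)"
        using additive_subgroup.a_closed[OF ideal.axioms(1)[OF MSk] t(1,3)] .
      ultimately show ?case by (rule image_eqI)
    qed
  qed
qed

definition restrict_germ :: "nat \<Rightarrow> mpoly set \<Rightarrow> (nat \<Rightarrow> complex) \<Rightarrow> (mpoly \<times> mpoly) set \<Rightarrow> (mpoly \<times> mpoly) set" where
  "restrict_germ r I p A = frac_cls r I p (frac_rep A)"

locale restriction =
  X: homogeneous_localization r P p + Y: homogeneous_localization r I p
  for r P I p +
  assumes subset: "P \<subseteq> I"
begin

lemma restrict_germ_cls: "x \<in> X.Fr \<Longrightarrow> restrict_germ r I p (X.cls x) = Y.cls x"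
  unfolding restrict_germ_def
  using X.eqv_rep subset X.rep_in_Fr Y.cls_eq_iff unfolding frac_eqv_def by blast

lemma ring_hom_ring_restrict_germ: "ring_hom_ring X.Rp Y.Rp (restrict_germ r I p)"
proof (rule ring_hom_ringI[OF cring.axioms(1)[OF X.cring_local_ring] cring.axioms(1)[OF Y.cring_local_ring]])
  fix A B assume "A \<in> carrier X.Rp" "B \<in> carrier X.Rp"
  then show "restrict_germ r I p (A \<otimes>\<^bsub>X.Rp\<^esub> B) = restrict_germ r I p A \<otimes>\<^bsub>Y.Rp\<^esub> restrict_germ r I p B"
    "restrict_germ r I p (A \<oplus>\<^bsub>X.Rp\<^esub> B) = restrict_germ r I p A \<oplus>\<^bsub>Y.Rp\<^esub> restrict_germ r I p B"
    by (auto elim!: X.carrier_local_ringE simp: X.cls_mult X.cls_add Y.cls_mult Y.cls_add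
        restrict_germ_cls frac_mult_dom frac_add_dom)
qed (auto elim!: X.carrier_local_ringE simp: restrict_germ_cls Y.cls_in_carrier X.one_local_ring
    Y.one_local_ring frac_one_dom)

lemma cls_in_kernel_restrict_germ:
  "x \<in> X.Fr \<Longrightarrow> fst x \<in> I \<Longrightarrow> X.cls x \<in> a_kernel X.Rp Y.Rp (restrict_germ r I p)"
  unfolding a_kernel_def' using restrict_germ_cls X.cls_in_carrier Y.cls_eq_zero_if_numerator_in by auto

lemma carrier_subset_image_restrict_germ: "carrier Y.Rp \<subseteq> restrict_germ r I p ` carrier X.Rp"
  using restrict_germ_cls X.cls_in_carrier by (force elim: Y.carrier_local_ringE)

end

locale restriction_at_point = restriction +
  X: local_ring_at_point r P p + Y: local_ring_at_point r I p
begin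

lemma max_ideal_subset_image_restrict_germ:
  "max_ideal Y.Rp \<subseteq> restrict_germ r I p ` max_ideal X.Rp"
proof
  fix B assume "B \<in> max_ideal Y.Rp"
  then obtain x where x: "x \<in> X.Fr" "B = Y.cls x" "Y.germ_value (Y.cls x) = 0"
    unfolding Y.max_ideal_local_ring by (auto elim: Y.carrier_local_ringE)
  then have "X.cls x \<in> max_ideal X.Rp"
    unfolding X.max_ideal_local_ring using X.germ_value_cls Y.germ_value_cls X.cls_in_carrier by simp
  then show "B \<in> restrict_germ r I p ` max_ideal X.Rp" using restrict_germ_cls[OF x(1)] x(2) by force
qed

lemma ideal_pow_max_ideal_zero_if_in_kernel:
  assumes "ideal_pow X.Rp (max_ideal X.Rp) m \<subseteq> a_kernel X.Rp Y.Rp (restrict_germ r I p)"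
  shows "ideal_pow Y.Rp (max_ideal Y.Rp) m \<subseteq> {\<zero>\<^bsub>Y.Rp\<^esub>}"
proof -
  interpret ring_hom_ring X.Rp Y.Rp "restrict_germ r I p" by (rule ring_hom_ring_restrict_germ)
  have "restrict_germ r I p ` ideal_pow X.Rp (max_ideal X.Rp) m \<subseteq> {\<zero>\<^bsub>Y.Rp\<^esub>}"
    using assms unfolding a_kernel_def' by auto
  then show ?thesis
    using ideal_pow_image[OF X.ideal_max_ideal_local_ring carrier_subset_image_restrict_germ
        max_ideal_subset_image_restrict_germ, of m] by (rule order.trans[rotated])
qed

end

theorem lemma3p4:
  fixes r :: nat and P :: "mpoly set" and p :: "nat \<Rightarrow> complex" and m :: nat
    and ls :: "mpoly list"
  assumes X: "proj_variety r P"
    and pt: "proj_point r p" and pX: "on_subscheme P p"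
    and m_pos: "0 < m"
    and hyp: "\<forall>J. is_minimal_reduction_of_max (local_ring r P p) J \<longrightarrow>
                 ideal_pow (local_ring r P p) (max_ideal (local_ring r P p)) m \<subseteq> J"
    and L: "reduction_linear_subspace r P p ls"
  shows "loewy_length (local_ring r (intersection_ideal r P ls) p) \<le> m - 1"
proof -
  have SP: "S_ideal r P" using X unfolding proj_variety_def S_homogeneous_ideal_def by blast
  define I where "I = intersection_ideal r P ls"
  note XL = intersection_ideal_properties[OF SP pX L, folded I_def]
  interpret X: local_ring_at_proj_point r P p using SP pX pt by unfold_locales
  interpret restriction_at_point r P I p using SP pX XL by unfold_locales auto
  define G where "G = germ_of_linear_form r P p ` set ls"
  have G: "finite G" "G \<subseteq> carrier X.Rp" "is_reduction_of_max X.Rp (Idl\<^bsub>X.Rp\<^esub> G)"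
    using X.germs_of_reduction_linear_subspace[OF L] unfolding G_def by auto
  obtain J where J: "is_minimal_reduction_of_max X.Rp J" "J \<subseteq> Idl\<^bsub>X.Rp\<^esub> G"
    using cring.exists_minimal_reduction[OF X.cring_local_ring X.ideal_max_ideal_local_ring
        X.finite_max_ideal_gens X.max_ideal_gens_subset X.max_ideal_eq_genideal_max_ideal_gens G] by blast
  have "G \<subseteq> a_kernel X.Rp Y.Rp (restrict_germ r I p)"
    using L X.germ_of_linear_form_dom cls_in_kernel_restrict_germ XL(3)
    unfolding G_def reduction_linear_subspace_def by auto
  then have "ideal_pow X.Rp (max_ideal X.Rp) m \<subseteq> a_kernel X.Rp Y.Rp (restrict_germ r I p)"
    using hyp J ring.genideal_minimal[OF cring.axioms(1)[OF X.cring_local_ring]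
        ring_hom_ring.kernel_is_ideal[OF ring_hom_ring_restrict_germ]] by blast
  then show ?thesis unfolding I_def[symmetric]
    by (intro cring.loewy_length_le[OF Y.cring_local_ring Y.ideal_max_ideal_local_ring
          Y.one_neq_zero_local_ring] ideal_pow_max_ideal_zero_if_in_kernel)
qed

end
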